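(* Let $\lambda/\mu$ be an r-shape and $\mathbf a',\mathbf b'$ row flags for it. Then $$\overline{\mathsf S}^{\mathbf a',\mathbf b'}_{\lambda/\mu}(\mathbf y/\mathbf z)=\sum_{T\in\overline{ST}_{\lambda/\mu}(\mathbf a',\mathbf b')}wt(T).$$
   Context: Young diagrams in English notation; cell $(i,j)$ in row $i$, column $j$. An r-shape is $(\lambda/\mu,r)$ with shifted contents $c(i,j)=j-i+r-1+\lambda'_1$. Row flags: vectors $\mathbf a'=(a'_i),\mathbf b'=(b'_i)$ of integers with $a'_i\le a'_{i+1}$, $b'_i\le b'_{i+1}$ whenever $\mu_i<\lambda_{i+1}$. $\mathbf y_{a,b}=(y_a,\ldots,y_b)$ (empty if $a>b$); $h_n(\mathbf x/\mathbf w)=\sum_{i=0}^n(-1)^{n-i}h_i(\mathbf x)e_{n-i}(\mathbf w)$ ($h_0=1$, $h_n=0$ for $n<0$). The row flagged supersymmetric Schur function is $\overline{\mathsf S}^{\mathbf a',\mathbf b'}_{\lambda/\mu}(\mathbf y/\mathbf z)=\det[h_{\lambda_i-\mu_j-i+j}(\mathbf y_{a'_j,b'_i}/\mathbf z_{a_j,b_i})]_{1\le i,j\le n}$ for $n\ge\ell(\lambda)$, where $a_j=a'_j+c(\zeta_j)$, $b_i=b'_i+c(\xi_i)$ with $\zeta_j$ the leftmost cell of row $j$ and $\xi_i$ the rightmost cell of row $i$. A row flagged $\mathbb Z$-SSYT is a filling $\tilde T$ of the cells by integers, weakly increasing along rows, strictly increasing down columns, with $a'_i\le\tilde T_{ij}\le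 b'_i$ for every cell in row $i$. A row flagged super tableau $T$ is obtained from $\tilde T$ by choosing independently for each cell either $T_{ij}=\tilde T_{ij}\in\mathbb Z$ or $T_{ij}=(\tilde T_{ij}+c(i,j))'\in\mathbb Z'$ (primed integers). $\overline{ST}_{\lambda/\mu}(\mathbf a',\mathbf b')$ is the set of all such. $wt(T)=\prod wt(T_{ij})$ with $wt(r)=y_r$, $wt(r')=-z_r$. *)

theory Defs
  imports "HOL-Library.Multiset" "Jordan_Normal_Form.Determinant"
begin

definition is_partition :: "nat list \<Rightarrow> bool" where
  "is_partition p \<longleftrightarrow> sorted (rev p) \<and> 0 \<notin> set p"

(* 1-based part access: p_i, with p_i = 0 for i = 0 or i > length p *)
definition part :: "nat list \<Rightarrow> nat \<Rightarrow> nat" where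
  "part p i = (if 1 \<le> i \<and> i \<le> length p then p ! (i - 1) else 0)"

definition contained :: "nat list \<Rightarrow> nat list \<Rightarrow> bool" where
  "contained mu lam \<longleftrightarrow> (\<forall>i. part mu i \<le> part lam i)"

(* cells (i,j) of the skew diagram lam/mu, English notation, 1-based *)
definition cells :: "nat list \<Rightarrow> nat list \<Rightarrow> (nat \<times> nat) set" where
  "cells lam mu = {(i, j). 1 \<le> i \<and> i \<le> length lam \<and> part mu i < j \<and> j \<le> part lam i}"

(* shifted content c(i,j) = j - i + r - 1 + lambda'_1, where lambda'_1 = length lam *)
definition content :: "nat list \<Rightarrow> int \<Rightarrow> nat \<Rightarrow> nat \<Rightarrow> int" where
  "content lam r i j = int j - int i + r - 1 + int (length lam)"

definition row_flags :: "nat list \<Rightarrow> nat list \<Rightarrow> (nat \<Rightarrow> int) \<Rightarrow> (nat \<Rightarrow> int) \<Rightarrow> bool" where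
  "row_flags lam mu a' b' \<longleftrightarrow>
     (\<forall>i\<ge>1. part mu i < part lam (Suc i) \<longrightarrow> a' i \<le> a' (Suc i) \<and> b' i \<le> b' (Suc i))"

definition hcomp :: "(int \<Rightarrow> 'a::comm_ring_1) \<Rightarrow> int \<Rightarrow> int \<Rightarrow> nat \<Rightarrow> 'a" where
  "hcomp x a b k = (\<Sum>M\<in>{M. set_mset M \<subseteq> {a..b} \<and> size M = k}. \<Prod>\<^sub># (image_mset x M))"

definition elem :: "(int \<Rightarrow> 'a::comm_ring_1) \<Rightarrow> int \<Rightarrow> int \<Rightarrow> nat \<Rightarrow> 'a" where
  "elem w a b k = (\<Sum>S\<in>{S. S \<subseteq> {a..b} \<and> card S = k}. \<Prod>i\<in>S. w i)"

definition hsup :: "(int \<Rightarrow> 'a::comm_ring_1) \<Rightarrow> (int \<Rightarrow> 'a) \<Rightarrow> int \<Rightarrow> int \<Rightarrow> int \<Rightarrow> int \<Rightarrow> int \<Rightarrow> 'a" where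
  "hsup y z a' b' a b n =
     (if n < 0 then 0 else
      (\<Sum>i\<in>{0..nat n}. (-1) ^ (nat n - i) * hcomp y a' b' i * elem z a b (nat n - i)))"

definition flagged_schur ::
  "nat list \<Rightarrow> nat list \<Rightarrow> int \<Rightarrow> (nat \<Rightarrow> int) \<Rightarrow> (nat \<Rightarrow> int) \<Rightarrow> (int \<Rightarrow> 'a::comm_ring_1) \<Rightarrow> (int \<Rightarrow> 'a) \<Rightarrow> nat \<Rightarrow> 'a" where
  "flagged_schur lam mu r a' b' y z n =
     det (mat n n (\<lambda>(i0, j0).
       let i = Suc i0; j = Suc j0;
           a = a' j + content lam r j (Suc (part mu j));
           b = b' i + content lam r i (part lam i)
       in hsup y z (a' j) (b' i) a b
            (int (part lam i) - int (part mu j) - int i + int j)))"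

definition flagged_ssyt ::
  "nat list \<Rightarrow> nat list \<Rightarrow> (nat \<Rightarrow> int) \<Rightarrow> (nat \<Rightarrow> int) \<Rightarrow> (nat \<Rightarrow> nat \<Rightarrow> int) \<Rightarrow> bool" where
  "flagged_ssyt lam mu a' b' T \<longleftrightarrow>
     (\<forall>(i, j)\<in>cells lam mu. a' i \<le> T i j \<and> T i j \<le> b' i) \<and>
     (\<forall>(i, j)\<in>cells lam mu. \<forall>(i', j')\<in>cells lam mu. i = i' \<and> j \<le> j' \<longrightarrow> T i j \<le> T i' j') \<and>
     (\<forall>(i, j)\<in>cells lam mu. \<forall>(i', j')\<in>cells lam mu. j = j' \<and> i < i' \<longrightarrow> T i j < T i' j') \<and>
     (\<forall>i j. (i, j) \<notin> cells lam mu \<longrightarrow> T i j = 0)"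

(* super tableaux: entries Inl k = unprimed integer k, Inr k = primed integer k';
   extended by Inl 0 outside the diagram *)
definition super_tableaux ::
  "nat list \<Rightarrow> nat list \<Rightarrow> int \<Rightarrow> (nat \<Rightarrow> int) \<Rightarrow> (nat \<Rightarrow> int) \<Rightarrow> (nat \<Rightarrow> nat \<Rightarrow> int + int) set" where
  "super_tableaux lam mu r a' b' =
     {T. \<exists>Tt. flagged_ssyt lam mu a' b' Tt \<and>
          (\<forall>(i, j)\<in>cells lam mu.
              T i j = Inl (Tt i j) \<or> T i j = Inr (Tt i j + content lam r i j)) \<and>
          (\<forall>i j. (i, j) \<notin> cells lam mu \<longrightarrow> T i j = Inl 0)}"

fun wt_entry :: "(int \<Rightarrow> 'a::comm_ring_1) \<Rightarrow> (int \<Rightarrow> 'a) \<Rightarrow> int + int \<Rightarrow> 'a" where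
  "wt_entry y z (Inl k) = y k"
| "wt_entry y z (Inr k) = - z k"

definition wt :: "nat list \<Rightarrow> nat list \<Rightarrow> (int \<Rightarrow> 'a::comm_ring_1) \<Rightarrow> (int \<Rightarrow> 'a) \<Rightarrow> (nat \<Rightarrow> nat \<Rightarrow> int + int) \<Rightarrow> 'a" where
  "wt lam mu y z T = (\<Prod>(i, j)\<in>cells lam mu. wt_entry y z (T i j))"

end

theory Submission
  imports Defs "HOL-Computational_Algebra.Formal_Power_Series" "HOL-Library.Disjoint_Sets"
begin

text \<open>Each entry \<open>h(y/z)\<close> of the determinant is the generating function of the fillings of one
  row segment by weakly increasing, possibly primed entries between the flags; such a filling is
  a lattice path from the diagonal where row \<open>j\<close> starts to the diagonal where row \<open>i\<close> ends.
  Expanding the determinant gives a signed sum over systems of \<open>n\<close> paths. Swapping the tails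
  of two paths at a common vertex (Lindstrom--Gessel--Viennot) is a sign-reversing,
  weight-preserving involution on the systems with a crossing. In a system without crossings the
  row-flag condition forces the identity permutation, and its paths are then exactly the rows
  of a row flagged super tableau, with the same weight.\<close>

section \<open>Supersymmetric complete homogeneous functions\<close>

lemma multisets_of_size_insert_split:
  assumes "0 < k"
  shows "multisets_of_size (insert b A) k =
           multisets_of_size A k \<union> add_mset b ` multisets_of_size (insert b A) (k - 1)"
proof (intro equalityI subsetI)
  fix M assume M: "M \<in> multisets_of_size (insert b A) k"
  show "M \<in> multisets_of_size A k \<union> add_mset b ` multisets_of_size (insert b A) (k - 1)"
  proof (cases "b \<in># M")
    case True
    then have "M = add_mset b (M - {#b#})" by simp
    moreover have "M - {#b#} \<in> multisets_of_size (insert b A) (k - 1)"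
      using M True by (auto simp: multisets_of_size_def size_Diff_submset dest: in_diffD)
    ultimately show ?thesis by blast
  qed (use M in \<open>auto simp: multisets_of_size_def\<close>)
qed (use assms in \<open>auto simp: multisets_of_size_def\<close>)

lemma subsets_of_card_insert_split:
  assumes "finite A" "b \<notin> A" "0 < k"
  shows "{S. S \<subseteq> insert b A \<and> card S = k} =
           {S. S \<subseteq> A \<and> card S = k} \<union> insert b ` {S. S \<subseteq> A \<and> card S = k - 1}"
proof (intro equalityI subsetI)
  fix S assume S: "S \<in> {S. S \<subseteq> insert b A \<and> card S = k}"
  then have fin: "finite S"
    using finite_subset[OF _ finite_insert[THEN iffD2, OF assms(1)]] by blast
  show "S \<in> {S. S \<subseteq> A \<and> card S = k} \<union> insert b ` {S. S \<subseteq> A \<and> card S = k - 1}"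
  proof (cases "b \<in> S")
    case True
    then have "S = insert b (S - {b})" "S - {b} \<subseteq> A" "card (S - {b}) = k - 1"
      using S fin by auto
    then show ?thesis
      by blast
  next
    case False
    then show ?thesis
      using S by blast
  qed
next
  fix S assume "S \<in> {S. S \<subseteq> A \<and> card S = k} \<union> insert b ` {S. S \<subseteq> A \<and> card S = k - 1}"
  then consider "S \<subseteq> A" "card S = k" | S' where "S = insert b S'" "S' \<subseteq> A" "card S' = k - 1"
    by blast
  then show "S \<in> {S. S \<subseteq> insert b A \<and> card S = k}"
  proof cases
    case 2
    then have "finite S'" "b \<notin> S'"
      using finite_subset[OF _ assms(1)] assms(2) by auto
    then show ?thesis
      using 2 assms(3) by auto
  qed auto
qed

lemma interval_insert_top: "(a::int) \<le> b \<Longrightarrow> {a..b} = insert b {a..b - 1}"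
  by auto

lemma hcomp_0 [simp]: "hcomp y a b 0 = 1"
  unfolding hcomp_def multisets_of_size_def[symmetric] by simp

lemma hcomp_step:
  assumes "a \<le> b" "0 < k"
  shows "hcomp y a b k = hcomp y a (b - 1) k + y b * hcomp y a b (k - 1)"
proof -
  have split: "multisets_of_size {a..b} k =
      multisets_of_size {a..b - 1} k \<union> add_mset b ` multisets_of_size {a..b} (k - 1)"
    unfolding interval_insert_top[OF assms(1)] by (rule multisets_of_size_insert_split[OF assms(2)])
  have disjoint: "multisets_of_size {a..b - 1} k \<inter> add_mset b ` multisets_of_size {a..b} (k - 1) = {}"
    by (fastforce simp: multisets_of_size_def)
  have "(\<Sum>M\<in>add_mset b ` multisets_of_size {a..b} (k - 1). \<Prod>\<^sub># (image_mset y M)) =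
        (\<Sum>M\<in>multisets_of_size {a..b} (k - 1). y b * \<Prod>\<^sub># (image_mset y M))"
    by (subst sum.reindex) (auto simp: inj_on_def)
  then show ?thesis
    unfolding hcomp_def multisets_of_size_def[symmetric] split
    using disjoint by (simp add: sum.union_disjoint finite_multisets_of_size sum_distrib_left)
qed

lemma hcomp_empty: "b < a \<Longrightarrow> 0 < k \<Longrightarrow> hcomp y a b k = 0"
  unfolding hcomp_def multisets_of_size_def[symmetric] by simp

lemma elem_0 [simp]: "elem z a b 0 = 1"
proof -
  have "{S. S \<subseteq> {a..b} \<and> card S = 0} = {{}}"
    using finite_subset[of _ "{a..b}"] by auto
  then show ?thesis
    by (simp add: elem_def)
qed

lemma elem_step:
  assumes "a \<le> b" "0 < k"
  shows "elem z a b k = elem z a (b - 1) k + z b * elem z a (b - 1) (k - 1)"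
proof -
  let ?S = "\<lambda>j. {S. S \<subseteq> {a..b - 1} \<and> card S = j}"
  have split: "{S. S \<subseteq> {a..b} \<and> card S = k} = ?S k \<union> insert b ` ?S (k - 1)"
    unfolding interval_insert_top[OF assms(1)]
    by (rule subsets_of_card_insert_split) (simp_all add: assms(2))
  have fin: "finite (?S j)" for j
    by (rule finite_subset[of _ "Pow {a..b - 1}"]) auto
  have member: "finite S" "b \<notin> S" if "S \<in> ?S j" for S j
  proof -
    have "S \<subseteq> {a..b - 1}"
      using that by simp
    then show "finite S" "b \<notin> S"
      using finite_subset[OF _ finite_atLeastAtMost_int] by auto
  qed
  have inj: "inj_on (insert b) (?S (k - 1))"
  proof (rule inj_onI)
    fix S T assume S: "S \<in> ?S (k - 1)" and T: "T \<in> ?S (k - 1)" and eq: "insert b S = insert b T"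
    have "S = insert b S - {b}"
      using member(2)[OF S] by simp
    also have "\<dots> = T"
      using member(2)[OF T] eq by simp
    finally show "S = T" .
  qed
  have "(\<Sum>S\<in>insert b ` ?S (k - 1). prod z S) = (\<Sum>S\<in>?S (k - 1). z b * prod z S)"
    unfolding sum.reindex[OF inj] o_def
  proof (rule sum.cong[OF refl])
    fix S assume "S \<in> ?S (k - 1)"
    then show "prod z (insert b S) = z b * prod z S"
      using member[of S "k - 1"] by simp
  qed
  moreover have "?S k \<inter> insert b ` ?S (k - 1) = {}"
    using member(2) by blast
  ultimately show ?thesis
    unfolding elem_def split using fin by (simp add: sum.union_disjoint sum_distrib_left)
qed

lemma elem_vanish:
  assumes "card {a..b} < k"
  shows "elem z a b k = 0"
proof -
  have "card S \<noteq> k" if "S \<subseteq> {a..b}" for S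
    using card_mono[OF finite_atLeastAtMost_int that] assms by linarith
  then have "{S. S \<subseteq> {a..b} \<and> card S = k} = {}"
    by blast
  then show ?thesis
    by (simp only: elem_def sum.empty)
qed

definition hfps :: "(int \<Rightarrow> 'a::comm_ring_1) \<Rightarrow> int \<Rightarrow> int \<Rightarrow> 'a fps" where
  "hfps y a b = Abs_fps (hcomp y a b)"

definition efps :: "(int \<Rightarrow> 'a::comm_ring_1) \<Rightarrow> int \<Rightarrow> int \<Rightarrow> 'a fps" where
  "efps z a b = Abs_fps (\<lambda>k. (-1) ^ k * elem z a b k)"

lemma hsup_eq_fps_nth:
  "0 \<le> m \<Longrightarrow> hsup y z a' b' a b m = fps_nth (hfps y a' b' * efps z a b) (nat m)"
  unfolding hsup_def hfps_def efps_def fps_mult_nth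
  by (auto intro!: sum.cong simp: mult_ac)

lemma hfps_step:
  assumes "a \<le> b"
  shows "hfps y a b = hfps y a (b - 1) + fps_const (y b) * fps_X * hfps y a b"
proof (rule fps_ext)
  fix k
  show "fps_nth (hfps y a b) k = fps_nth (hfps y a (b - 1) + fps_const (y b) * fps_X * hfps y a b) k"
    using hcomp_step[OF assms, of k y] by (cases k) (simp_all add: hfps_def mult.assoc fps_X_mult_nth)
qed

lemma efps_step:
  assumes "a \<le> b"
  shows "efps z a b = efps z a (b - 1) - fps_const (z b) * fps_X * efps z a (b - 1)"
proof (rule fps_ext)
  fix k
  show "fps_nth (efps z a b) k = fps_nth (efps z a (b - 1) - fps_const (z b) * fps_X * efps z a (b - 1)) k"
    using elem_step[OF assms, of k z] by (cases k) (simp_all add: efps_def mult.assoc fps_X_mult_nth algebra_simps)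
qed

lemma hsup_step:
  assumes "a' \<le> b'" "a \<le> b" "0 < m"
  shows "hsup y z a' b' a b m = hsup y z a' (b' - 1) a (b - 1) m + (y b' - z b) * hsup y z a' b' a (b - 1) (m - 1)"
proof -
  let ?H = "hfps y a' b'" and ?H' = "hfps y a' (b' - 1)"
  let ?E = "efps z a b" and ?E' = "efps z a (b - 1)"
  define P where "P = ?H * ?E'"
  have h: "P = ?H' * ?E' + fps_const (y b') * fps_X * P"
    unfolding P_def by (subst (1) hfps_step[OF assms(1)]) (simp add: algebra_simps)
  have "?H * ?E = (P - fps_const (y b') * fps_X * P) + fps_const (y b') * fps_X * P - fps_const (z b) * fps_X * P"
    unfolding P_def by (subst efps_step[OF assms(2)]) (simp add: algebra_simps)
  also have "P - fps_const (y b') * fps_X * P = ?H' * ?E'"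
    using h by (metis add_diff_cancel_right')
  finally have "?H * ?E = ?H' * ?E' + fps_const (y b') * (fps_X * P) - fps_const (z b) * (fps_X * P)"
    by (simp add: mult.assoc)
  then have "fps_nth (?H * ?E) (nat m) = fps_nth (?H' * ?E') (nat m) + (y b' - z b) * fps_nth P (nat m - 1)"
    using assms(3) by (simp only: fps_add_nth fps_sub_nth fps_mult_left_const_nth fps_X_mult_nth)
      (simp add: algebra_simps)
  moreover have "nat m - 1 = nat (m - 1)"
    using assms(3) by simp
  ultimately show ?thesis
    using assms(3) by (simp add: hsup_eq_fps_nth P_def)
qed

lemma hsup_0 [simp]: "hsup y z a' b' a b 0 = 1"
  by (simp add: hsup_def)

lemma hsup_neg: "m < 0 \<Longrightarrow> hsup y z a' b' a b m = 0"
  by (simp add: hsup_def)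

lemma hsup_vanish:
  assumes "b' < a'" "0 < m" "b - a + 1 < m"
  shows "hsup y z a' b' a b m = 0"
proof -
  have "hcomp y a' b' i * elem z a b (nat m - i) = 0" if "i \<le> nat m" for i
    using assms by (cases "i = 0") (auto simp: hcomp_empty elem_vanish)
  then show ?thesis
    by (simp add: hsup_def mult.assoc)
qed

lemma hsup_telescope:
  assumes "0 < m" "a' - 1 \<le> b'"
  shows "hsup y z a' b' (a' + d - m + 1) (b' + d) m =
    (\<Sum>v\<in>{a'..b'}. hsup y z a' v (a' + d - m + 1) (v + d - 1) (m - 1) * (y v - z (v + d)))"
  using assms(2)
proof (induction b' rule: int_ge_induct)
  case base
  then show ?case
    using assms(1) by (simp add: hsup_vanish)
next
  case (step v)
  have "hsup y z a' (v + 1) (a' + d - m + 1) (v + 1 + d) m =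
        hsup y z a' (v + 1 - 1) (a' + d - m + 1) (v + 1 + d - 1) m
        + (y (v + 1) - z (v + 1 + d)) * hsup y z a' (v + 1) (a' + d - m + 1) (v + 1 + d - 1) (m - 1)"
    by (rule hsup_step) (use assms(1) step(1) in auto)
  also have "\<dots> = hsup y z a' v (a' + d - m + 1) (v + d) m
        + (y (v + 1) - z (v + 1 + d)) * hsup y z a' (v + 1) (a' + d - m + 1) (v + 1 + d - 1) (m - 1)"
    by simp
  also have "\<dots> = (\<Sum>u\<in>insert (v + 1) {a'..v}. hsup y z a' u (a' + d - m + 1) (u + d - 1) (m - 1) * (y u - z (u + d)))"
    unfolding step.IH by (simp add: algebra_simps)
  finally show ?case
    using step(1) by (simp add: interval_insert_top[of a' "v + 1"])
qed

section \<open>Rows of super tableaux\<close>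

text \<open>A row of a super tableau is modelled by its entries along the diagonals \<open>x\<close> it
  occupies: a value together with a flag telling whether the entry is primed. A primed entry
  on diagonal \<open>x\<close> carries the weight of its value shifted by the content \<open>x + c\<close>.\<close>

type_synonym row_filling = "int \<Rightarrow> int \<times> bool"

definition row_fillings :: "int \<Rightarrow> int \<Rightarrow> int \<Rightarrow> int \<Rightarrow> row_filling set" where
  "row_fillings lo hi p q = {f \<in> PiE {p..q} (\<lambda>_. {lo..hi} \<times> UNIV).
      \<forall>x\<in>{p..q}. \<forall>x'\<in>{p..q}. x \<le> x' \<longrightarrow> fst (f x) \<le> fst (f x')}"

definition entry_weight :: "(int \<Rightarrow> 'a::comm_ring_1) \<Rightarrow> (int \<Rightarrow> 'a) \<Rightarrow> int \<Rightarrow> int \<Rightarrow> int \<times> bool \<Rightarrow> 'a" where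
  "entry_weight y z c x e = (if snd e then - z (fst e + x + c) else y (fst e))"

lemma finite_row_fillings: "finite (row_fillings lo hi p q)"
proof -
  have "finite (PiE {p..q} (\<lambda>_. {lo..hi} \<times> (UNIV :: bool set)))"
    by (rule finite_PiE) auto
  then show ?thesis
    unfolding row_fillings_def by simp
qed

lemma row_fillings_iff:
  "f \<in> row_fillings lo hi p q \<longleftrightarrow>
     (\<forall>x. x \<notin> {p..q} \<longrightarrow> f x = undefined) \<and>
     (\<forall>x\<in>{p..q}. lo \<le> fst (f x) \<and> fst (f x) \<le> hi) \<and>
     (\<forall>x\<in>{p..q}. \<forall>x'\<in>{p..q}. x \<le> x' \<longrightarrow> fst (f x) \<le> fst (f x'))"
  by (auto simp: row_fillings_def PiE_def extensional_def Pi_def mem_Times_iff)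

lemma row_fillings_append:
  assumes f: "f \<in> row_fillings lo v p q" and v: "v \<in> {lo..hi}" and "p - 1 \<le> q"
  shows "f(q + 1 := (v, b)) \<in> row_fillings lo hi p (q + 1)"
proof -
  have top: "{p..q + 1} = insert (q + 1) {p..q}"
    using assms(3) by auto
  from f have out: "\<And>x. x \<notin> {p..q} \<Longrightarrow> f x = undefined"
    and val: "\<And>x. x \<in> {p..q} \<Longrightarrow> lo \<le> fst (f x) \<and> fst (f x) \<le> v"
    and mono: "\<And>x x'. x \<in> {p..q} \<Longrightarrow> x' \<in> {p..q} \<Longrightarrow> x \<le> x' \<Longrightarrow> fst (f x) \<le> fst (f x')"
    by (simp_all add: row_fillings_iff)
  have "\<forall>x. x \<notin> insert (q + 1) {p..q} \<longrightarrow> (f(q + 1 := (v, b))) x = undefined"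
    using out by simp
  moreover have "\<forall>x\<in>insert (q + 1) {p..q}. lo \<le> fst ((f(q + 1 := (v, b))) x) \<and> fst ((f(q + 1 := (v, b))) x) \<le> hi"
  proof
    fix x assume "x \<in> insert (q + 1) {p..q}"
    then show "lo \<le> fst ((f(q + 1 := (v, b))) x) \<and> fst ((f(q + 1 := (v, b))) x) \<le> hi"
      using v val[of x] by (cases "x = q + 1") auto
  qed
  moreover have "\<forall>x\<in>insert (q + 1) {p..q}. \<forall>x'\<in>insert (q + 1) {p..q}.
      x \<le> x' \<longrightarrow> fst ((f(q + 1 := (v, b))) x) \<le> fst ((f(q + 1 := (v, b))) x')"
    using val mono by fastforce
  ultimately show ?thesis
    unfolding row_fillings_iff top by blast
qed

lemma row_fillings_truncate:
  assumes f: "f \<in> row_fillings lo hi p (q + 1)" and "p - 1 \<le> q"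
  shows "fst (f (q + 1)) \<in> {lo..hi}" "f(q + 1 := undefined) \<in> row_fillings lo (fst (f (q + 1))) p q"
proof -
  have top: "{p..q + 1} = insert (q + 1) {p..q}"
    using assms(2) by auto
  show "fst (f (q + 1)) \<in> {lo..hi}"
    using assms by (simp add: row_fillings_iff)
  show "f(q + 1 := undefined) \<in> row_fillings lo (fst (f (q + 1))) p q"
    using f unfolding row_fillings_iff top by auto
qed

lemma row_fillings_extend:
  assumes "p - 1 \<le> q"
  shows "bij_betw (\<lambda>(e, f). f(q + 1 := e))
           (SIGMA e:{lo..hi} \<times> UNIV. row_fillings lo (fst e) p q) (row_fillings lo hi p (q + 1))"
proof (rule bij_betw_byWitness[where f' = "\<lambda>f. (f (q + 1), f(q + 1 := undefined))"])
  show "\<forall>u\<in>SIGMA e:{lo..hi} \<times> UNIV. row_fillings lo (fst e) p q.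
          (\<lambda>f. (f (q + 1), f(q + 1 := undefined))) ((\<lambda>(e, f). f(q + 1 := e)) u) = u"
    by (auto simp: row_fillings_def PiE_def extensional_def fun_eq_iff)
  show "\<forall>f\<in>row_fillings lo hi p (q + 1).
          (\<lambda>(e, f). f(q + 1 := e)) ((\<lambda>f. (f (q + 1), f(q + 1 := undefined))) f) = f"
    by auto
  show "(\<lambda>(e, f). f(q + 1 := e)) ` (SIGMA e:{lo..hi} \<times> UNIV. row_fillings lo (fst e) p q)
          \<subseteq> row_fillings lo hi p (q + 1)"
  proof
    fix u assume "u \<in> (\<lambda>(e, f). f(q + 1 := e)) ` (SIGMA e:{lo..hi} \<times> UNIV. row_fillings lo (fst e) p q)"
    then obtain v b f where u: "u = f(q + 1 := (v, b))" and v: "v \<in> {lo..hi}" and f: "f \<in> row_fillings lo v p q"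
      by auto
    show "u \<in> row_fillings lo hi p (q + 1)"
      unfolding u by (rule row_fillings_append[OF f v assms])
  qed
  show "(\<lambda>f. (f (q + 1), f(q + 1 := undefined))) ` row_fillings lo hi p (q + 1)
          \<subseteq> (SIGMA e:{lo..hi} \<times> UNIV. row_fillings lo (fst e) p q)"
  proof (rule image_subsetI)
    fix f assume f: "f \<in> row_fillings lo hi p (q + 1)"
    show "(f (q + 1), f(q + 1 := undefined)) \<in> (SIGMA e:{lo..hi} \<times> UNIV. row_fillings lo (fst e) p q)"
      using row_fillings_truncate[OF f assms] by (intro SigmaI) (simp_all add: mem_Times_iff)
  qed
qed

lemma sum_row_fillings:
  assumes "p - 1 \<le> q"
  shows "(\<Sum>f\<in>row_fillings lo hi p q. \<Prod>x\<in>{p..q}. entry_weight y z c x (f x)) =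
         hsup y z lo hi (lo + p + c) (hi + q + c) (q - p + 1)"
  using assms
proof (induction q arbitrary: hi rule: int_ge_induct)
  case base
  have "row_fillings lo hi p (p - 1) = {\<lambda>_. undefined}"
    by (auto simp: row_fillings_def)
  then show ?case by simp
next
  case (step q)
  let ?w = "\<lambda>f. \<Prod>x\<in>{p..q}. entry_weight y z c x (f x)"
  have "(\<Sum>f\<in>row_fillings lo hi p (q + 1). \<Prod>x\<in>{p..q + 1}. entry_weight y z c x (f x))
      = (\<Sum>(e, f)\<in>(SIGMA e:{lo..hi} \<times> UNIV. row_fillings lo (fst e) p q).
           entry_weight y z c (q + 1) e * ?w f)"
    using step(1)
    by (subst sum.reindex_bij_betw[OF row_fillings_extend, symmetric])
       (auto simp: interval_insert_top[of p "q + 1"] intro!: sum.cong prod.cong)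
  also have "\<dots> = (\<Sum>e\<in>{lo..hi} \<times> UNIV. \<Sum>f\<in>row_fillings lo (fst e) p q. entry_weight y z c (q + 1) e * ?w f)"
    by (subst sum.Sigma) (auto simp: finite_row_fillings split_def)
  also have "\<dots> = (\<Sum>e\<in>{lo..hi} \<times> UNIV. entry_weight y z c (q + 1) e * (\<Sum>f\<in>row_fillings lo (fst e) p q. ?w f))"
    by (simp add: sum_distrib_left)
  also have "\<dots> = (\<Sum>e\<in>{lo..hi} \<times> UNIV. entry_weight y z c (q + 1) e * hsup y z lo (fst e) (lo + p + c) (fst e + q + c) (q - p + 1))"
    using step.IH by simp
  also have "\<dots> = (\<Sum>v\<in>{lo..hi}. \<Sum>b\<in>UNIV. entry_weight y z c (q + 1) (v, b) * hsup y z lo v (lo + p + c) (v + q + c) (q - p + 1))"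
    by (subst sum.cartesian_product) (simp add: split_def)
  also have "\<dots> = (\<Sum>v\<in>{lo..hi}. hsup y z lo v (lo + p + c) (v + q + c) (q - p + 1) * (y v - z (v + (q + 1 + c))))"
    by (rule sum.cong[OF refl]) (simp add: UNIV_bool entry_weight_def algebra_simps)
  also have "\<dots> = hsup y z lo hi (lo + p + c) (hi + (q + 1) + c) (q + 1 - p + 1)"
  proof (cases "lo - 1 \<le> hi")
    case True
    then show ?thesis
      using hsup_telescope[OF _ True, of "q + 1 - p + 1" y z "q + 1 + c"] step(1)
      by (simp add: algebra_simps)
  next
    case False
    then show ?thesis
      using step(1) by (simp add: hsup_vanish)
  qed
  finally show ?case .
qed

section \<open>Lattice paths between flagged diagonals\<close>

lemma (in comm_monoid_set) pair_cong:
  assumes "finite A" "i \<in> A" "j \<in> A" "i \<noteq> j"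
    and "\<And>k. k \<in> A \<Longrightarrow> k \<noteq> i \<Longrightarrow> k \<noteq> j \<Longrightarrow> g' k = g k"
    and "g' i \<^bold>* g' j = g i \<^bold>* g j"
  shows "F g' A = F g A"
proof -
  have j: "j \<in> A - {i}" and fin: "finite (A - {i})"
    using assms by auto
  have "F h A = h i \<^bold>* (h j \<^bold>* F h (A - {i} - {j}))" for h
    using remove[OF assms(1,2), of h] remove[OF fin j, of h] by simp
  moreover have "F g' (A - {i} - {j}) = F g (A - {i} - {j})"
    using assms by (intro cong) auto
  ultimately show ?thesis
    using assms(6) by (simp flip: assoc)
qed

text \<open>Two lattice paths whose vertical steps are disjoint in every column stay in the order
  in which they start.\<close>

lemma heights_separate:
  fixes f g :: "int \<Rightarrow> int"
  assumes g_mono: "\<And>u v. l \<le> u \<Longrightarrow> u \<le> v \<Longrightarrow> v \<le> r + 1 \<Longrightarrow> g u \<le> g v"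
    and apart: "\<And>x h. l \<le> x \<Longrightarrow> x \<le> r \<Longrightarrow> f x \<le> h \<Longrightarrow> h \<le> f (x + 1) \<Longrightarrow>
                  g x \<le> h \<Longrightarrow> h \<le> g (x + 1) \<Longrightarrow> False"
    and start: "f l \<le> g l"
    and x: "l \<le> x" "x \<le> r"
  shows "f (x + 1) < g x"
  using x
proof (induction x rule: int_ge_induct)
  case base
  show ?case
    using apart[of l "g l"] start g_mono[of l "l + 1"] base by force
next
  case (step x)
  then have "f (x + 1) \<le> g (x + 1)"
    using g_mono[of x "x + 1"] by force
  then show ?case
    using apart[of "x + 1" "g (x + 1)"] g_mono[of "x + 1" "x + 1 + 1"] step by force
qed

text \<open>Row \<open>k\<close> of a skew shape occupies the diagonals \<open>P k..Q k\<close>, and \<open>\<alpha>\<close>, \<open>\<beta>\<close> are its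
  row flags. A path from source \<open>j\<close> to sink \<open>i\<close> is a row filling of the diagonals
  \<open>P j..Q i\<close> with entries in \<open>[\<alpha> j, \<beta> i]\<close>; its height function, extended by \<open>\<alpha> j\<close> to
  the left and \<open>\<beta> i\<close> to the right, is a lattice path whose vertical step at \<open>x\<close> climbs from
  height \<open>height x\<close> to \<open>height (x + 1)\<close>.\<close>

locale flagged_paths =
  fixes n :: nat and P Q \<alpha> \<beta> :: "nat \<Rightarrow> int"
  assumes P_step: "P (Suc k) \<le> P k - 1"
    and Q_step: "Q (Suc k) \<le> Q k - 1"
    and P_le_Q: "P k - 1 \<le> Q k"
    and flags_step: "Suc k < n \<Longrightarrow> P k - 1 \<le> Q (Suc k) \<Longrightarrow> \<alpha> k \<le> \<alpha> (Suc k) \<and> \<beta> k \<le> \<beta> (Suc k)"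
begin

definition paths :: "nat \<Rightarrow> nat \<Rightarrow> row_filling set" where
  "paths j i = (if P j - 1 \<le> Q i then row_fillings (\<alpha> j) (\<beta> i) (P j) (Q i) else {})"

definition height :: "nat \<Rightarrow> nat \<Rightarrow> row_filling \<Rightarrow> int \<Rightarrow> int" where
  "height j i f x = (if x < P j then \<alpha> j else if Q i < x then \<beta> i else fst (f x))"

definition vertices :: "nat \<Rightarrow> nat \<Rightarrow> row_filling \<Rightarrow> (int \<times> int) set" where
  "vertices j i f = {(x, h). P j - 1 \<le> x \<and> x \<le> Q i \<and> height j i f x \<le> h \<and> h \<le> height j i f (x + 1)}"

definition height_mono :: "nat \<Rightarrow> nat \<Rightarrow> row_filling \<Rightarrow> bool" where
  "height_mono j i f \<longleftrightarrow>
     (\<forall>x1 x2. P j - 1 \<le> x1 \<longrightarrow> x1 \<le> x2 \<longrightarrow> x2 \<le> Q i + 1 \<longrightarrow> height j i f x1 \<le> height j i f x2)"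

definition splice :: "int \<Rightarrow> row_filling \<Rightarrow> row_filling \<Rightarrow> row_filling" where
  "splice x0 f g = (\<lambda>x. if x \<le> x0 then f x else g x)"

definition path_weight :: "(int \<Rightarrow> 'a::comm_ring_1) \<Rightarrow> (int \<Rightarrow> 'a) \<Rightarrow> int \<Rightarrow> nat \<Rightarrow> nat \<Rightarrow> row_filling \<Rightarrow> 'a" where
  "path_weight y z c j i f = (\<Prod>x\<in>{P j..Q i}. entry_weight y z c x (f x))"

lemma P_diff_le: "j \<le> j' \<Longrightarrow> P j' \<le> P j - int (j' - j)"
proof (induction j' rule: dec_induct)
  case (step k)
  then show ?case
    using P_step[of k] by (simp add: Suc_diff_le)
qed simp

lemma Q_diff_le: "j \<le> j' \<Longrightarrow> Q j' \<le> Q j - int (j' - j)"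
proof (induction j' rule: dec_induct)
  case (step k)
  then show ?case
    using Q_step[of k] by (simp add: Suc_diff_le)
qed simp

lemma P_antimono: "j \<le> j' \<Longrightarrow> P j' \<le> P j"
  using P_diff_le[of j j'] by simp

lemma Q_antimono: "j \<le> j' \<Longrightarrow> Q j' \<le> Q j"
  using Q_diff_le[of j j'] by simp

lemma P_strict_antimono: "j < j' \<Longrightarrow> P j' < P j"
  using P_diff_le[of j j'] by simp

lemma Q_strict_antimono: "j < j' \<Longrightarrow> Q j' < Q j"
  using Q_diff_le[of j j'] by simp

lemma finite_paths: "finite (paths j i)"
  by (simp add: paths_def finite_row_fillings)

lemma paths_range: "f \<in> paths j i \<Longrightarrow> P j - 1 \<le> Q i"
  by (simp add: paths_def split: if_splits)

lemma paths_undefined: "f \<in> paths j i \<Longrightarrow> x \<notin> {P j..Q i} \<Longrightarrow> f x = undefined"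
  by (simp add: paths_def row_fillings_iff split: if_splits)

lemma paths_bounds: "f \<in> paths j i \<Longrightarrow> P j \<le> x \<Longrightarrow> x \<le> Q i \<Longrightarrow> \<alpha> j \<le> fst (f x) \<and> fst (f x) \<le> \<beta> i"
  by (simp add: paths_def row_fillings_iff split: if_splits)

lemma paths_mono:
  "f \<in> paths j i \<Longrightarrow> P j \<le> x \<Longrightarrow> x \<le> x' \<Longrightarrow> x' \<le> Q i \<Longrightarrow> fst (f x) \<le> fst (f x')"
  by (simp add: paths_def row_fillings_iff split: if_splits)

lemma height_before: "height j i f (P j - 1) = \<alpha> j"
  by (simp add: height_def)

lemma height_after: "P j - 1 \<le> Q i \<Longrightarrow> height j i f (Q i + 1) = \<beta> i"
  by (simp add: height_def)

lemma height_mono_if_nonempty: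
  assumes f: "f \<in> paths j i" and nonempty: "P j \<le> Q i"
  shows "height_mono j i f"
  unfolding height_mono_def
proof (intro allI impI)
  fix x1 x2 assume x: "P j - 1 \<le> x1" "x1 \<le> x2" "x2 \<le> Q i + 1"
  have "\<alpha> j \<le> \<beta> i"
    using paths_bounds[OF f nonempty order.refl] by simp
  then show "height j i f x1 \<le> height j i f x2"
    using x paths_bounds[OF f, of x1] paths_bounds[OF f, of x2] paths_mono[OF f, of x1 x2]
    by (auto simp: height_def)
qed

lemma height_mono_if_vertices:
  assumes f: "f \<in> paths j i" and v: "vertices j i f \<noteq> {}"
  shows "height_mono j i f"
proof (cases "P j \<le> Q i")
  case True
  then show ?thesis
    using height_mono_if_nonempty[OF f] by simp
next
  case False
  then have empty: "Q i = P j - 1"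
    using paths_range[OF f] by simp
  obtain x h where "(x, h) \<in> vertices j i f"
    using v by auto
  then have "\<alpha> j \<le> \<beta> i"
    using empty by (auto simp: vertices_def height_def split: if_splits)
  then show ?thesis
    using empty by (auto simp: height_mono_def height_def)
qed

lemma paths_if_height_mono:
  assumes undef: "\<And>x. x \<notin> {P j..Q i} \<Longrightarrow> f x = undefined"
    and range: "P j - 1 \<le> Q i" and mono: "height_mono j i f"
  shows "f \<in> paths j i"
proof -
  have inside: "height j i f x = fst (f x)" if "x \<in> {P j..Q i}" for x
    using that by (simp add: height_def)
  have "height j i f (P j - 1) \<le> height j i f x" "height j i f x \<le> height j i f (Q i + 1)"
    if "x \<in> {P j..Q i}" for x
    using mono that by (auto simp: height_mono_def)
  then have bounds: "\<alpha> j \<le> fst (f x) \<and> fst (f x) \<le> \<beta> i" if "x \<in> {P j..Q i}" for x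
    using that inside height_before[of j i f] height_after[OF range, of f] by force
  have "height j i f x \<le> height j i f x'" if "x \<in> {P j..Q i}" "x' \<in> {P j..Q i}" "x \<le> x'" for x x'
    using mono that by (simp add: height_mono_def)
  then have "fst (f x) \<le> fst (f x')" if "x \<in> {P j..Q i}" "x' \<in> {P j..Q i}" "x \<le> x'" for x x'
    using that inside by metis
  then show ?thesis
    using undef bounds range by (simp add: paths_def row_fillings_iff)
qed

lemma height_splice:
  assumes "P a - 1 \<le> x0" "x0 \<le> Q b" "P c - 1 \<le> x0" "x0 \<le> Q d"
  shows "height a d (splice x0 f g) x = (if x \<le> x0 then height a b f x else height c d g x)"
  using assms by (auto simp: height_def splice_def)

lemma splice_paths:
  assumes f: "f \<in> paths a b" and g: "g \<in> paths c d"
    and vf: "(x0, h) \<in> vertices a b f" and vg: "(x0, h) \<in> vertices c d g"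
  shows "splice x0 f g \<in> paths a d"
proof -
  have x0: "P a - 1 \<le> x0" "x0 \<le> Q b" "P c - 1 \<le> x0" "x0 \<le> Q d"
    using vf vg by (auto simp: vertices_def)
  have mf: "height_mono a b f" and mg: "height_mono c d g"
    using height_mono_if_vertices[OF f] height_mono_if_vertices[OF g] vf vg by auto
  have hf: "height a b f x0 \<le> h" and hg: "h \<le> height c d g (x0 + 1)"
    using vf vg by (auto simp: vertices_def)
  have "height_mono a d (splice x0 f g)"
    unfolding height_mono_def height_splice[OF x0]
  proof (intro allI impI)
    fix x1 x2 assume x: "P a - 1 \<le> x1" "x1 \<le> x2" "x2 \<le> Q d + 1"
    show "(if x1 \<le> x0 then height a b f x1 else height c d g x1) \<le>
          (if x2 \<le> x0 then height a b f x2 else height c d g x2)"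
    proof (cases "x2 \<le> x0")
      case True
      then show ?thesis
        using mf x x0 by (auto simp: height_mono_def)
    next
      case x2: False
      show ?thesis
      proof (cases "x1 \<le> x0")
        case True
        have "height a b f x1 \<le> height a b f x0" "height c d g (x0 + 1) \<le> height c d g x2"
          using mf mg x True x2 x0 by (auto simp: height_mono_def)
        then show ?thesis
          using True x2 hf hg by simp
      qed (use mg x x0 x2 in \<open>auto simp: height_mono_def\<close>)
    qed
  qed
  then show ?thesis
    using paths_undefined[OF f] paths_undefined[OF g] x0
    by (intro paths_if_height_mono) (auto simp: splice_def)
qed

lemma vertices_splice:
  assumes "(x0, h) \<in> vertices a b f" and "(x0, h) \<in> vertices c d g"
  shows "x < x0 \<Longrightarrow> (x, h') \<in> vertices a d (splice x0 f g) \<longleftrightarrow> (x, h') \<in> vertices a b f"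
    and "x0 < x \<Longrightarrow> (x, h') \<in> vertices a d (splice x0 f g) \<longleftrightarrow> (x, h') \<in> vertices c d g"
    and "(x0, h') \<in> vertices a d (splice x0 f g) \<longleftrightarrow> height a b f x0 \<le> h' \<and> h' \<le> height c d g (x0 + 1)"
proof -
  have x0: "P a - 1 \<le> x0" "x0 \<le> Q b" "P c - 1 \<le> x0" "x0 \<le> Q d"
    using assms by (auto simp: vertices_def)
  show "x < x0 \<Longrightarrow> (x, h') \<in> vertices a d (splice x0 f g) \<longleftrightarrow> (x, h') \<in> vertices a b f"
    and "x0 < x \<Longrightarrow> (x, h') \<in> vertices a d (splice x0 f g) \<longleftrightarrow> (x, h') \<in> vertices c d g"
    and "(x0, h') \<in> vertices a d (splice x0 f g) \<longleftrightarrow> height a b f x0 \<le> h' \<and> h' \<le> height c d g (x0 + 1)"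
    using x0 by (auto simp: vertices_def height_splice[OF x0])
qed

lemma vertices_splice_count:
  assumes vf: "(x0, h) \<in> vertices a b f" and vg: "(x0, h) \<in> vertices c d g"
  shows "of_bool (w \<in> vertices a d (splice x0 f g)) + of_bool (w \<in> vertices c b (splice x0 g f))
       = of_bool (w \<in> vertices a b f) + (of_bool (w \<in> vertices c d g) :: nat)"
proof -
  obtain x h' where w: "w = (x, h')"
    by (cases w)
  have x0: "P a - 1 \<le> x0" "x0 \<le> Q b" "P c - 1 \<le> x0" "x0 \<le> Q d"
    using vf vg by (auto simp: vertices_def)
  consider "x < x0" | "x0 < x" | "x = x0"
    by linarith
  then show ?thesis
  proof cases
    case 3
    have "(x0, h') \<in> vertices a b f \<longleftrightarrow> height a b f x0 \<le> h' \<and> h' \<le> height a b f (x0 + 1)"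
      and "(x0, h') \<in> vertices c d g \<longleftrightarrow> height c d g x0 \<le> h' \<and> h' \<le> height c d g (x0 + 1)"
      using x0 by (auto simp: vertices_def)
    moreover have "height a b f x0 \<le> h" "h \<le> height a b f (x0 + 1)"
      and "height c d g x0 \<le> h" "h \<le> height c d g (x0 + 1)"
      using vf vg by (auto simp: vertices_def)
    ultimately show ?thesis
      unfolding w 3 vertices_splice(3)[OF vf vg] vertices_splice(3)[OF vg vf] by auto
  qed (use vertices_splice[OF vf vg] vertices_splice[OF vg vf] w in auto)
qed

lemma path_weight_splice:
  assumes "P a - 1 \<le> x0" "x0 \<le> Q b" "P c - 1 \<le> x0" "x0 \<le> Q d"
  shows "path_weight y z c0 a d (splice x0 f g) * path_weight y z c0 c b (splice x0 g f)
       = path_weight y z c0 a b f * path_weight y z c0 c d g"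
proof -
  have split: "{p..q} = {p..x0} \<union> {x0 + 1..q}" if "p - 1 \<le> x0" "x0 \<le> q" for p q
    using that by auto
  have "(\<Prod>x\<in>{p..q}. u x) = (\<Prod>x\<in>{p..x0}. u x) * (\<Prod>x\<in>{x0 + 1..q}. u x)"
    if "p - 1 \<le> x0" "x0 \<le> q" for p q and u :: "int \<Rightarrow> 'a"
    unfolding split[OF that] by (rule prod.union_disjoint) auto
  note prod_split = this[OF assms(1,4)] this[OF assms(3,2)] this[OF assms(1,2)] this[OF assms(3,4)]
  have left: "(\<Prod>x\<in>{p..x0}. entry_weight y z c0 x (splice x0 u v x)) = (\<Prod>x\<in>{p..x0}. entry_weight y z c0 x (u x))"
    for p u v by (rule prod.cong) (auto simp: splice_def)
  have right: "(\<Prod>x\<in>{x0 + 1..q}. entry_weight y z c0 x (splice x0 u v x)) = (\<Prod>x\<in>{x0 + 1..q}. entry_weight y z c0 x (v x))"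
    for q u v by (rule prod.cong) (auto simp: splice_def)
  show ?thesis
    unfolding path_weight_def prod_split left right by (simp add: ac_simps)
qed

lemma splice_splice: "splice x0 (splice x0 f g) (splice x0 g f) = f"
  by (auto simp: splice_def)

end


section \<open>The tail swapping involution\<close>

type_synonym path_system = "(nat \<Rightarrow> nat) \<times> (nat \<Rightarrow> row_filling)"

context flagged_paths
begin

definition systems :: "path_system set" where
  "systems = (SIGMA \<sigma>:{\<sigma>. \<sigma> permutes {..<n}}. PiE {..<n} (\<lambda>k. paths (\<sigma> k) k))"

definition system_vertices :: "path_system \<Rightarrow> nat \<Rightarrow> (int \<times> int) set" where
  "system_vertices s k = vertices (fst s k) k (snd s k)"

definition meets :: "path_system \<Rightarrow> int \<times> int \<Rightarrow> nat set" where
  "meets s w = {k \<in> {..<n}. w \<in> system_vertices s k}"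

definition crossings :: "path_system \<Rightarrow> (int \<times> int) set" where
  "crossings s = {w. 2 \<le> card (meets s w)}"

text \<open>Any choice of a crossing and of two paths through it that depends only on the crossings
  and on the paths meeting there will do, since the tail swap changes neither.\<close>

definition crossing :: "path_system \<Rightarrow> int \<times> int" where
  "crossing s = (SOME w. w \<in> crossings s)"

definition swap_fst :: "path_system \<Rightarrow> nat" where
  "swap_fst s = Min (meets s (crossing s))"

definition swap_snd :: "path_system \<Rightarrow> nat" where
  "swap_snd s = Min (meets s (crossing s) - {swap_fst s})"

definition swap_tails :: "int \<Rightarrow> nat \<Rightarrow> nat \<Rightarrow> (nat \<Rightarrow> row_filling) \<Rightarrow> nat \<Rightarrow> row_filling" where
  "swap_tails x0 i j F = F(i := splice x0 (F j) (F i), j := splice x0 (F i) (F j))"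

definition tail_swap :: "path_system \<Rightarrow> path_system" where
  "tail_swap s = (fst s \<circ> transpose (swap_fst s) (swap_snd s),
     swap_tails (fst (crossing s)) (swap_fst s) (swap_snd s) (snd s))"

definition signed_weight :: "(int \<Rightarrow> 'a::comm_ring_1) \<Rightarrow> (int \<Rightarrow> 'a) \<Rightarrow> int \<Rightarrow> path_system \<Rightarrow> 'a" where
  "signed_weight y z c s = of_int (sign (fst s)) * (\<Prod>k<n. path_weight y z c (fst s k) k (snd s k))"

lemma finite_systems: "finite systems"
  unfolding systems_def by (intro finite_SigmaI finite_PiE) (auto simp: finite_paths finite_permutations)

lemma systemsD:
  assumes "(\<sigma>, F) \<in> systems"
  shows "\<sigma> permutes {..<n}" "\<And>k. k < n \<Longrightarrow> F k \<in> paths (\<sigma> k) k" "\<And>k. n \<le> k \<Longrightarrow> F k = undefined"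
proof -
  from assms have F: "F \<in> PiE {..<n} (\<lambda>k. paths (\<sigma> k) k)" and "\<sigma> permutes {..<n}"
    by (auto simp: systems_def)
  then show "\<sigma> permutes {..<n}" "\<And>k. k < n \<Longrightarrow> F k \<in> paths (\<sigma> k) k" "\<And>k. n \<le> k \<Longrightarrow> F k = undefined"
    using PiE_mem[OF F] PiE_arb[OF F] by auto
qed

lemma card_meets: "card (meets s w) = (\<Sum>k<n. of_bool (w \<in> system_vertices s k))"
proof -
  have "meets s w = {..<n} \<inter> {k. w \<in> system_vertices s k}"
    by (auto simp: meets_def)
  then show ?thesis
    by simp
qed

lemma crossing_in_crossings: "crossings s \<noteq> {} \<Longrightarrow> crossing s \<in> crossings s"
  unfolding crossing_def by (rule someI_ex) blast

lemma swap_indices: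
  assumes "crossings s \<noteq> {}"
  shows "swap_fst s \<in> meets s (crossing s)" "swap_snd s \<in> meets s (crossing s)" "swap_fst s \<noteq> swap_snd s"
proof -
  have two: "2 \<le> card (meets s (crossing s))"
    using crossing_in_crossings[OF assms] by (simp add: crossings_def)
  have fin: "finite (meets s (crossing s))"
    by (simp add: meets_def)
  show fst_in: "swap_fst s \<in> meets s (crossing s)"
    unfolding swap_fst_def using fin two by (intro Min_in) auto
  have "card (meets s (crossing s) - {swap_fst s}) \<noteq> 0"
    using two fin fst_in by simp
  then have "meets s (crossing s) - {swap_fst s} \<noteq> {}"
    by (metis card.empty)
  then have "swap_snd s \<in> meets s (crossing s) - {swap_fst s}"
    unfolding swap_snd_def using fin by (intro Min_in) auto
  then show "swap_snd s \<in> meets s (crossing s)" "swap_fst s \<noteq> swap_snd s"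
    by auto
qed

lemma tail_swap_cases:
  assumes "crossings (\<sigma>, F) \<noteq> {}"
  obtains i j x0 h0 where "i < n" "j < n" "i \<noteq> j"
    "swap_fst (\<sigma>, F) = i" "swap_snd (\<sigma>, F) = j" "crossing (\<sigma>, F) = (x0, h0)"
    "(x0, h0) \<in> vertices (\<sigma> i) i (F i)" "(x0, h0) \<in> vertices (\<sigma> j) j (F j)"
    "tail_swap (\<sigma>, F) = (\<sigma> \<circ> transpose i j, swap_tails x0 i j F)"
proof -
  obtain x0 h0 where "crossing (\<sigma>, F) = (x0, h0)"
    by (cases "crossing (\<sigma>, F)")
  with swap_indices[OF assms] show thesis
    by (intro that[of "swap_fst (\<sigma>, F)" "swap_snd (\<sigma>, F)" x0 h0])
       (auto simp: meets_def system_vertices_def tail_swap_def)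
qed

lemma tail_swap_systems:
  assumes s: "(\<sigma>, F) \<in> systems" and c: "crossings (\<sigma>, F) \<noteq> {}"
  shows "tail_swap (\<sigma>, F) \<in> systems"
proof -
  obtain i j x0 h0 where ij: "i < n" "j < n" "i \<noteq> j"
    and "swap_fst (\<sigma>, F) = i" "swap_snd (\<sigma>, F) = j" "crossing (\<sigma>, F) = (x0, h0)"
    and vi: "(x0, h0) \<in> vertices (\<sigma> i) i (F i)" and vj: "(x0, h0) \<in> vertices (\<sigma> j) j (F j)"
    and swap: "tail_swap (\<sigma>, F) = (\<sigma> \<circ> transpose i j, swap_tails x0 i j F)"
    by (rule tail_swap_cases[OF c])
  note \<sigma> = systemsD(1)[OF s] and F = systemsD(2,3)[OF s]
  have "splice x0 (F j) (F i) \<in> paths (\<sigma> j) i" "splice x0 (F i) (F j) \<in> paths (\<sigma> i) j"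
    using splice_paths[OF F(1)[OF ij(2)] F(1)[OF ij(1)] vj vi]
      splice_paths[OF F(1)[OF ij(1)] F(1)[OF ij(2)] vi vj] by blast+
  then have "swap_tails x0 i j F \<in> PiE {..<n} (\<lambda>k. paths ((\<sigma> \<circ> transpose i j) k) k)"
    using F ij by (intro PiE_I) (auto simp: swap_tails_def)
  moreover have "\<sigma> \<circ> transpose i j permutes {..<n}"
    using permutes_compose[OF permutes_swap_id \<sigma>] ij by auto
  ultimately show ?thesis
    unfolding swap systems_def by simp
qed

lemma card_meets_tail_swap:
  assumes c: "crossings (\<sigma>, F) \<noteq> {}"
  shows "card (meets (tail_swap (\<sigma>, F)) w) = card (meets (\<sigma>, F) w)"
proof -
  obtain i j x0 h0 where ij: "i < n" "j < n" "i \<noteq> j"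
    and "swap_fst (\<sigma>, F) = i" "swap_snd (\<sigma>, F) = j" "crossing (\<sigma>, F) = (x0, h0)"
    and vi: "(x0, h0) \<in> vertices (\<sigma> i) i (F i)" and vj: "(x0, h0) \<in> vertices (\<sigma> j) j (F j)"
    and swap: "tail_swap (\<sigma>, F) = (\<sigma> \<circ> transpose i j, swap_tails x0 i j F)"
    by (rule tail_swap_cases[OF c])
  have pair: "of_bool (w \<in> system_vertices (tail_swap (\<sigma>, F)) i) + of_bool (w \<in> system_vertices (tail_swap (\<sigma>, F)) j)
      = of_bool (w \<in> system_vertices (\<sigma>, F) i) + (of_bool (w \<in> system_vertices (\<sigma>, F) j) :: nat)"
    using vertices_splice_count[OF vj vi, of w] ij
    by (simp add: swap system_vertices_def swap_tails_def add.commute)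
  have other: "system_vertices (tail_swap (\<sigma>, F)) k = system_vertices (\<sigma>, F) k" if "k \<noteq> i" "k \<noteq> j" for k
    using that by (simp add: swap system_vertices_def swap_tails_def)
  show ?thesis
    unfolding card_meets using ij other by (intro sum.pair_cong[OF _ _ _ _ _ pair]) auto
qed

lemma crossings_tail_swap:
  assumes "crossings (\<sigma>, F) \<noteq> {}"
  shows "crossings (tail_swap (\<sigma>, F)) = crossings (\<sigma>, F)"
  using card_meets_tail_swap[OF assms] by (simp add: crossings_def)

lemma meets_crossing_tail_swap:
  assumes c: "crossings (\<sigma>, F) \<noteq> {}"
  shows "meets (tail_swap (\<sigma>, F)) (crossing (\<sigma>, F)) = meets (\<sigma>, F) (crossing (\<sigma>, F))"
proof -
  obtain i j x0 h0 where ij: "i < n" "j < n" "i \<noteq> j"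
    and idx: "swap_fst (\<sigma>, F) = i" "swap_snd (\<sigma>, F) = j" "crossing (\<sigma>, F) = (x0, h0)"
    and vi: "(x0, h0) \<in> vertices (\<sigma> i) i (F i)" and vj: "(x0, h0) \<in> vertices (\<sigma> j) j (F j)"
    and swap: "tail_swap (\<sigma>, F) = (\<sigma> \<circ> transpose i j, swap_tails x0 i j F)"
    by (rule tail_swap_cases[OF c])
  have "(x0, h0) \<in> vertices (\<sigma> j) i (splice x0 (F j) (F i))" "(x0, h0) \<in> vertices (\<sigma> i) j (splice x0 (F i) (F j))"
    unfolding vertices_splice(3)[OF vj vi] vertices_splice(3)[OF vi vj]
    using vi vj by (auto simp: vertices_def)
  then have "(x0, h0) \<in> system_vertices (tail_swap (\<sigma>, F)) k \<longleftrightarrow> (x0, h0) \<in> system_vertices (\<sigma>, F) k" for k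
    using vi vj ij by (cases "k = i \<or> k = j") (auto simp: swap system_vertices_def swap_tails_def)
  then show ?thesis
    by (simp add: meets_def idx(3))
qed

lemma swap_indices_tail_swap:
  assumes "crossings (\<sigma>, F) \<noteq> {}"
  shows "swap_fst (tail_swap (\<sigma>, F)) = swap_fst (\<sigma>, F)" "swap_snd (tail_swap (\<sigma>, F)) = swap_snd (\<sigma>, F)"
  using crossings_tail_swap[OF assms] meets_crossing_tail_swap[OF assms]
  by (simp_all add: swap_fst_def swap_snd_def crossing_def)

lemma tail_swap_tail_swap:
  assumes c: "crossings (\<sigma>, F) \<noteq> {}"
  shows "tail_swap (tail_swap (\<sigma>, F)) = (\<sigma>, F)"
proof -
  obtain i j x0 h0 where ij: "i < n" "j < n" "i \<noteq> j"
    and idx: "swap_fst (\<sigma>, F) = i" "swap_snd (\<sigma>, F) = j" "crossing (\<sigma>, F) = (x0, h0)"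
    and "(x0, h0) \<in> vertices (\<sigma> i) i (F i)" and "(x0, h0) \<in> vertices (\<sigma> j) j (F j)"
    and swap: "tail_swap (\<sigma>, F) = (\<sigma> \<circ> transpose i j, swap_tails x0 i j F)"
    by (rule tail_swap_cases[OF c])
  have "swap_fst (tail_swap (\<sigma>, F)) = i" "swap_snd (tail_swap (\<sigma>, F)) = j"
    and "crossing (tail_swap (\<sigma>, F)) = (x0, h0)"
    using swap_indices_tail_swap[OF c] crossings_tail_swap[OF c] idx by (simp_all add: crossing_def)
  then show ?thesis
    unfolding tail_swap_def[of "tail_swap (\<sigma>, F)"] unfolding swap
    by (simp add: o_assoc[symmetric] swap_tails_def splice_splice ij)
qed

lemma tail_swap_neq:
  assumes s: "(\<sigma>, F) \<in> systems" and c: "crossings (\<sigma>, F) \<noteq> {}"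
  shows "tail_swap (\<sigma>, F) \<noteq> (\<sigma>, F)"
proof -
  obtain i j x0 h0 where ij: "i < n" "j < n" "i \<noteq> j"
    and "swap_fst (\<sigma>, F) = i" "swap_snd (\<sigma>, F) = j" "crossing (\<sigma>, F) = (x0, h0)"
    and "(x0, h0) \<in> vertices (\<sigma> i) i (F i)" and "(x0, h0) \<in> vertices (\<sigma> j) j (F j)"
    and swap: "tail_swap (\<sigma>, F) = (\<sigma> \<circ> transpose i j, swap_tails x0 i j F)"
    by (rule tail_swap_cases[OF c])
  have "\<sigma> j \<noteq> \<sigma> i"
    using permutes_inj[OF systemsD(1)[OF s]] ij by (metis injD)
  then have "(\<sigma> \<circ> transpose i j) i \<noteq> \<sigma> i"
    by simp
  then show ?thesis
    unfolding swap by (metis prod.inject)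
qed

lemma signed_weight_tail_swap:
  assumes s: "(\<sigma>, F) \<in> systems" and c: "crossings (\<sigma>, F) \<noteq> {}"
  shows "signed_weight y z c0 (tail_swap (\<sigma>, F)) = - signed_weight y z c0 (\<sigma>, F)"
proof -
  obtain i j x0 h0 where ij: "i < n" "j < n" "i \<noteq> j"
    and "swap_fst (\<sigma>, F) = i" "swap_snd (\<sigma>, F) = j" "crossing (\<sigma>, F) = (x0, h0)"
    and vi: "(x0, h0) \<in> vertices (\<sigma> i) i (F i)" and vj: "(x0, h0) \<in> vertices (\<sigma> j) j (F j)"
    and swap: "tail_swap (\<sigma>, F) = (\<sigma> \<circ> transpose i j, swap_tails x0 i j F)"
    by (rule tail_swap_cases[OF c])
  have "permutation \<sigma>"
    using systemsD(1)[OF s] permutation_permutes by blast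
  then have "sign (\<sigma> \<circ> transpose i j) = - sign \<sigma>"
    using ij by (simp add: sign_compose permutation_swap_id sign_swap_id)
  moreover have "(\<Prod>k<n. path_weight y z c0 ((\<sigma> \<circ> transpose i j) k) k (swap_tails x0 i j F k))
      = (\<Prod>k<n. path_weight y z c0 (\<sigma> k) k (F k))"
  proof (rule prod.pair_cong)
    have "P (\<sigma> j) - 1 \<le> x0" "x0 \<le> Q j" "P (\<sigma> i) - 1 \<le> x0" "x0 \<le> Q i"
      using vi vj by (auto simp: vertices_def)
    from path_weight_splice[OF this, of y z c0 "F j" "F i"]
    show "path_weight y z c0 ((\<sigma> \<circ> transpose i j) i) i (swap_tails x0 i j F i) *
          path_weight y z c0 ((\<sigma> \<circ> transpose i j) j) j (swap_tails x0 i j F j) =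
          path_weight y z c0 (\<sigma> i) i (F i) * path_weight y z c0 (\<sigma> j) j (F j)"
      using ij by (simp add: swap_tails_def mult.commute)
  qed (use ij in \<open>auto simp: swap_tails_def\<close>)
  ultimately show ?thesis
    by (simp add: signed_weight_def swap)
qed

lemma sum_crossing_systems_eq_0:
  "(\<Sum>s\<in>{s \<in> systems. crossings s \<noteq> {}}. signed_weight y z c s) = 0"
proof (rule sum_involution_eq_0[where h = tail_swap])
  fix s assume "s \<in> {s \<in> systems. crossings s \<noteq> {}}"
  then obtain \<sigma> F where s: "s = (\<sigma>, F)" and sys: "(\<sigma>, F) \<in> systems" and c: "crossings (\<sigma>, F) \<noteq> {}"
    by (cases s) auto
  show "signed_weight y z c (tail_swap s) + signed_weight y z c s = 0"
    by (simp add: s signed_weight_tail_swap[OF sys c])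
  show "tail_swap s \<in> {s \<in> systems. crossings s \<noteq> {}}"
    using tail_swap_systems[OF sys c] crossings_tail_swap[OF c] c s by simp
  show "tail_swap (tail_swap s) = s" "tail_swap s \<noteq> s"
    using tail_swap_tail_swap[OF c] tail_swap_neq[OF sys c] s by simp_all
qed

end


section \<open>Non-intersecting path systems\<close>

lemma permutes_first_moved:
  fixes \<sigma> :: "nat \<Rightarrow> nat"
  assumes \<sigma>: "\<sigma> permutes {..<n}" and "\<sigma> \<noteq> id"
  obtains i j where "i < \<sigma> i" "\<sigma> i < n" "i < j" "j < n" "\<sigma> j = i"
proof -
  have ex: "\<exists>k. k < n \<and> \<sigma> k \<noteq> k"
    using assms permutes_not_in[OF \<sigma>] by (metis eq_id_iff lessThan_iff)
  define i where "i = (LEAST k. k < n \<and> \<sigma> k \<noteq> k)"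
  have "i < n \<and> \<sigma> i \<noteq> i"
    unfolding i_def using LeastI_ex[of "\<lambda>k. k < n \<and> \<sigma> k \<noteq> k"] ex by blast
  then have i: "i < n" "\<sigma> i \<noteq> i"
    by simp_all
  have fixed: "\<sigma> k = k" if "k < i" for k
    using not_less_Least[of k "\<lambda>k. k < n \<and> \<sigma> k \<noteq> k"] that i(1) by (simp add: i_def)
  have inj: "inj \<sigma>"
    using permutes_inj[OF \<sigma>] .
  have "i < \<sigma> i"
  proof (rule ccontr)
    assume "\<not> i < \<sigma> i"
    then have "\<sigma> (\<sigma> i) = \<sigma> i"
      using i fixed by simp
    then show False
      using i inj by (metis injD)
  qed
  moreover have "\<sigma> i < n"
    using permutes_in_image[OF \<sigma>] i by auto
  moreover obtain j where j: "\<sigma> j = i"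
    using permutes_surj[OF \<sigma>] by (metis surjD)
  moreover have "j < n"
    using permutes_not_in[OF \<sigma>, of j] j i by fastforce
  moreover have "i < j"
  proof (rule ccontr)
    assume "\<not> i < j"
    moreover have "j \<noteq> i"
      using j i by auto
    ultimately have "\<sigma> j = j"
      using fixed by simp
    then show False
      using j \<open>j \<noteq> i\<close> by simp
  qed
  ultimately show thesis
    using that by blast
qed

context flagged_paths
begin

lemma crossingI:
  assumes "i < n" "j < n" "i \<noteq> j" "w \<in> system_vertices s i" "w \<in> system_vertices s j"
  shows "w \<in> crossings s"
proof -
  have "{i, j} \<subseteq> meets s w"
    using assms by (auto simp: meets_def)
  then have "card {i, j} \<le> card (meets s w)"
    by (rule card_mono[rotated]) (simp add: meets_def)
  then show ?thesis
    using assms(3) by (simp add: crossings_def)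
qed

lemma flags_chain:
  assumes "i \<le> i'" "i' < n" "\<And>m. i \<le> m \<Longrightarrow> m < i' \<Longrightarrow> P m - 1 \<le> Q (Suc m)"
  shows "\<alpha> i \<le> \<alpha> i' \<and> \<beta> i \<le> \<beta> i'"
  using assms
proof (induction i' rule: dec_induct)
  case (step k)
  then show ?case
    using flags_step[of k] by force
qed simp

text \<open>If rows \<open>m\<close> and \<open>m + 1\<close> do not overlap, no path can cross from one side of the gap to
  the other, so every path system respects the split into blocks.\<close>

lemma permutes_respects_gap:
  assumes \<sigma>: "\<sigma> permutes {..<n}" and reach: "\<And>k. k < n \<Longrightarrow> P (\<sigma> k) - 1 \<le> Q k"
    and gap: "Q (Suc m) < P m - 1" and k: "k < n"
  shows "k \<le> m \<longleftrightarrow> \<sigma> k \<le> m"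
proof -
  have up: "m < \<sigma> k'" if "m < k'" "k' < n" for k'
  proof (rule ccontr)
    assume "\<not> m < \<sigma> k'"
    then have "P m \<le> P (\<sigma> k')"
      by (simp add: P_antimono)
    moreover have "Q k' \<le> Q (Suc m)"
      using that by (simp add: Q_antimono)
    ultimately show False
      using reach[OF that(2)] gap by simp
  qed
  have inj: "inj \<sigma>"
    using permutes_inj[OF \<sigma>] .
  have "\<sigma> ` {Suc m..<n} \<subseteq> {Suc m..<n}"
  proof
    fix x assume "x \<in> \<sigma> ` {Suc m..<n}"
    then obtain k' where "k' \<in> {Suc m..<n}" "x = \<sigma> k'"
      by auto
    then show "x \<in> {Suc m..<n}"
      using up[of k'] permutes_in_image[OF \<sigma>, of k'] by simp
  qed
  then have onto: "\<sigma> ` {Suc m..<n} = {Suc m..<n}"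
    using inj by (intro endo_inj_surj) (auto intro: inj_on_subset)
  show ?thesis
  proof
    assume "k \<le> m"
    show "\<sigma> k \<le> m"
    proof (rule ccontr)
      assume "\<not> \<sigma> k \<le> m"
      then have "\<sigma> k \<in> \<sigma> ` {Suc m..<n}"
        unfolding onto using permutes_in_image[OF \<sigma>] k by simp
      then show False
        using inj \<open>k \<le> m\<close> by (auto simp: inj_eq)
    qed
  next
    assume "\<sigma> k \<le> m"
    then show "k \<le> m"
      using up[of k] k by linarith
  qed
qed

lemma flags_between:
  assumes \<sigma>: "\<sigma> permutes {..<n}" and reach: "\<And>k. k < n \<Longrightarrow> P (\<sigma> k) - 1 \<le> Q k" and k: "k < n"
  shows "\<alpha> (min k (\<sigma> k)) \<le> \<alpha> (max k (\<sigma> k)) \<and> \<beta> (min k (\<sigma> k)) \<le> \<beta> (max k (\<sigma> k))"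
proof (rule flags_chain)
  show "max k (\<sigma> k) < n"
    using permutes_in_image[OF \<sigma>] k by auto
  show "P m - 1 \<le> Q (Suc m)" if "min k (\<sigma> k) \<le> m" "m < max k (\<sigma> k)" for m
  proof (rule ccontr)
    assume "\<not> P m - 1 \<le> Q (Suc m)"
    then have "k \<le> m \<longleftrightarrow> \<sigma> k \<le> m"
      using permutes_respects_gap[OF \<sigma> reach _ k] by simp
    then show False
      using that by (auto simp: min_def max_def split: if_splits)
  qed
qed simp

lemma id_if_no_crossings:
  assumes s: "(\<sigma>, F) \<in> systems" and no_crossing: "crossings (\<sigma>, F) = {}"
  shows "\<sigma> = id"
proof (rule ccontr)
  assume "\<sigma> \<noteq> id"
  note \<sigma> = systemsD(1)[OF s] and F = systemsD(2)[OF s]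
  have reach: "\<And>k. k < n \<Longrightarrow> P (\<sigma> k) - 1 \<le> Q k"
    using F paths_range by blast
  obtain i j where i: "i < \<sigma> i" "\<sigma> i < n" and j: "i < j" "j < n" "\<sigma> j = i"
    using permutes_first_moved[OF \<sigma> \<open>\<sigma> \<noteq> id\<close>] .
  have "\<alpha> i \<le> \<alpha> (\<sigma> i)" "\<beta> i \<le> \<beta> j"
    using flags_between[OF \<sigma> reach, of i] flags_between[OF \<sigma> reach, of j] i j by auto
  text \<open>The path to sink \<open>j\<close> starts weakly below the path to sink \<open>i\<close> and ends weakly
    above it, so the two paths meet.\<close>
  let ?f = "height i j (F j)" and ?g = "height (\<sigma> i) i (F i)"
  have fj: "F j \<in> paths i j" and fi: "F i \<in> paths (\<sigma> i) i"
    using F i j by auto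
  have PQ: "P (\<sigma> i) \<le> P i - 1" "Q j < Q i" "P i - 1 \<le> Q j"
    using P_strict_antimono[OF i(1)] Q_strict_antimono[OF j(1)] paths_range[OF fj] by auto
  have g_mono: "height_mono (\<sigma> i) i (F i)"
    using height_mono_if_nonempty[OF fi] PQ P_le_Q[of i] by simp
  have "?f (Q j + 1) < ?g (Q j)"
  proof (rule heights_separate[where f = ?f and g = ?g and l = "P i - 1" and r = "Q j"])
    show "?g a \<le> ?g b" if "P i - 1 \<le> a" "a \<le> b" "b \<le> Q j + 1" for a b
      using g_mono that PQ by (simp add: height_mono_def)
    show False if "P i - 1 \<le> x" "x \<le> Q j" "?f x \<le> h" "h \<le> ?f (x + 1)" "?g x \<le> h" "h \<le> ?g (x + 1)" for x h
      using crossingI[of i j "(x, h)" "(\<sigma>, F)"] that PQ i j no_crossing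
      by (auto simp: system_vertices_def vertices_def)
    have "\<alpha> (\<sigma> i) \<le> ?g (P i - 1)"
      using g_mono PQ height_before[of "\<sigma> i" i "F i"] by (force simp: height_mono_def)
    then show "?f (P i - 1) \<le> ?g (P i - 1)"
      using \<open>\<alpha> i \<le> \<alpha> (\<sigma> i)\<close> by (simp add: height_before)
  qed (use PQ in auto)
  moreover have "?g (Q j) \<le> ?g (Q i + 1)"
    using g_mono PQ by (simp add: height_mono_def)
  moreover have "?g (Q i + 1) = \<beta> i"
    using PQ P_le_Q[of i] by (simp add: height_after)
  ultimately show False
    using \<open>\<beta> i \<le> \<beta> j\<close> height_after[OF PQ(3), of "F j"] by simp
qed

definition families :: "(nat \<Rightarrow> row_filling) set" where
  "families = PiE {..<n} (\<lambda>k. paths k k)"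

definition column_strict :: "(nat \<Rightarrow> row_filling) \<Rightarrow> bool" where
  "column_strict F \<longleftrightarrow> (\<forall>m x. Suc m < n \<longrightarrow> P m \<le> x \<longrightarrow> x \<le> Q m \<longrightarrow> P (Suc m) \<le> x - 1 \<longrightarrow>
      x - 1 \<le> Q (Suc m) \<longrightarrow> fst (F m x) < fst (F (Suc m) (x - 1)))"

lemma families_systems: "F \<in> families \<Longrightarrow> (id, F) \<in> systems"
  by (simp add: families_def systems_def permutes_id)

lemma families_paths: "F \<in> families \<Longrightarrow> k < n \<Longrightarrow> F k \<in> paths k k"
  by (auto simp: families_def PiE_iff)

lemma column_strict_if_no_crossings:
  assumes F: "F \<in> families" and no_crossing: "crossings (id, F) = {}"
  shows "column_strict F"
  unfolding column_strict_def
proof (intro allI impI)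
  fix m x assume m: "Suc m < n" and x: "P m \<le> x" "x \<le> Q m" "P (Suc m) \<le> x - 1" "x - 1 \<le> Q (Suc m)"
  let ?f = "height m m (F m)" and ?g = "height (Suc m) (Suc m) (F (Suc m))"
  have fg: "F m \<in> paths m m" "F (Suc m) \<in> paths (Suc m) (Suc m)"
    using families_paths[OF F] m by auto
  have PQ: "P (Suc m) \<le> P m - 1" "Q (Suc m) \<le> Q m - 1"
    using P_step Q_step by auto
  have g_mono: "height_mono (Suc m) (Suc m) (F (Suc m))"
    using height_mono_if_nonempty[OF fg(2)] x by simp
  have "?f (x - 1 + 1) < ?g (x - 1)"
  proof (rule heights_separate[where f = ?f and g = ?g and l = "P m - 1" and r = "Q (Suc m)"])
    show "?g a \<le> ?g b" if "P m - 1 \<le> a" "a \<le> b" "b \<le> Q (Suc m) + 1" for a b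
      using g_mono that PQ by (simp add: height_mono_def)
    show False if "P m - 1 \<le> y" "y \<le> Q (Suc m)" "?f y \<le> h" "h \<le> ?f (y + 1)" "?g y \<le> h" "h \<le> ?g (y + 1)" for y h
      using crossingI[of m "Suc m" "(y, h)" "(id, F)"] that PQ m no_crossing
      by (auto simp: system_vertices_def vertices_def)
    have "\<alpha> m \<le> \<alpha> (Suc m)"
      using flags_step[OF m] x by simp
    moreover have "\<alpha> (Suc m) \<le> ?g (P m - 1)"
      using g_mono PQ x height_before[of "Suc m" "Suc m" "F (Suc m)"] by (force simp: height_mono_def)
    ultimately show "?f (P m - 1) \<le> ?g (P m - 1)"
      by (simp add: height_before)
  qed (use x in auto)
  then show "fst (F m x) < fst (F (Suc m) (x - 1))"
    using x by (simp add: height_def)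
qed

lemma column_strict_adjacent:
  assumes cs: "column_strict F" and m: "Suc m < n" and x: "P m - 1 \<le> x" "x \<le> Q (Suc m)"
  shows "height m m (F m) (x + 1) < height (Suc m) (Suc m) (F (Suc m)) x"
proof -
  have "P m \<le> x + 1" "x + 1 \<le> Q m" "P (Suc m) \<le> x + 1 - 1" "x + 1 - 1 \<le> Q (Suc m)"
    using x P_step[of m] Q_step[of m] by auto
  from cs[unfolded column_strict_def, rule_format, OF m this] show ?thesis
    using x P_step[of m] Q_step[of m] by (simp add: height_def)
qed

lemma column_strict_height_less:
  assumes F: "F \<in> families" and cs: "column_strict F" and kk: "Suc k \<le> k'" "k' < n"
    and x: "P k - 1 \<le> x" "x \<le> Q k'"
  shows "height k k (F k) (x + 1) < height k' k' (F k') x"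
  using kk x
proof (induction k' rule: dec_induct)
  case base
  then show ?case
    using column_strict_adjacent[OF cs, of k x] by simp
next
  case (step m)
  have "P m \<le> P k - 1"
    using P_strict_antimono[of k m] step by simp
  moreover have "x + 1 \<le> Q m"
    using step Q_step[of m] by simp
  ultimately have "height m m (F m) x \<le> height m m (F m) (x + 1)"
    using paths_mono[OF families_paths[OF F], of m x "x + 1"] step by (auto simp: height_def)
  moreover have "height m m (F m) (x + 1) < height (Suc m) (Suc m) (F (Suc m)) x"
    using column_strict_adjacent[OF cs, of m x] step \<open>P m \<le> P k - 1\<close> by simp
  moreover have "height k k (F k) (x + 1) < height m m (F m) x"
    using step Q_step[of m] by simp
  ultimately show ?case
    by simp
qed

lemma no_crossings_if_column_strict:
  assumes F: "F \<in> families" and cs: "column_strict F"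
  shows "crossings (id, F) = {}"
proof -
  have apart: False if "k \<in> meets (id, F) (x, h)" "k' \<in> meets (id, F) (x, h)" "k < k'" for k k' x h
  proof -
    have "(x, h) \<in> vertices k k (F k)" "(x, h) \<in> vertices k' k' (F k')" "k' < n"
      using that by (auto simp: meets_def system_vertices_def)
    moreover from this have "height k k (F k) (x + 1) < height k' k' (F k') x"
      using that(3) by (intro column_strict_height_less[OF F cs]) (auto simp: vertices_def)
    ultimately show False
      by (auto simp: vertices_def)
  qed
  have at_most_one: "card (meets (id, F) w) \<le> Suc 0" for w
  proof -
    obtain x h where w: "w = (x, h)"
      by (cases w)
    have "a = b" if "a \<in> meets (id, F) w" "b \<in> meets (id, F) w" for a b
      using apart[of a x h b] apart[of b x h a] that w by (cases a b rule: linorder_cases) auto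
    moreover have "finite (meets (id, F) w)"
      by (simp add: meets_def)
    ultimately show ?thesis
      using card_le_Suc0_iff_eq by blast
  qed
  have "\<not> 2 \<le> card (meets (id, F) w)" for w
    using at_most_one[of w] by linarith
  then show ?thesis
    by (simp add: crossings_def)
qed

lemma sum_systems_eq_sum_column_strict:
  "(\<Sum>s\<in>systems. signed_weight y z c s) = (\<Sum>F\<in>{F \<in> families. column_strict F}. \<Prod>k<n. path_weight y z c k k (F k))"
proof -
  have "{s \<in> systems. crossings s = {}} \<subseteq> Pair id ` {F \<in> families. column_strict F}"
  proof
    fix s assume s: "s \<in> {s \<in> systems. crossings s = {}}"
    obtain \<sigma> F where s_eq: "s = (\<sigma>, F)"
      by (cases s)
    then have "(\<sigma>, F) \<in> systems" "crossings (\<sigma>, F) = {}"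
      using s by auto
    then have "\<sigma> = id"
      by (rule id_if_no_crossings)
    then have "F \<in> families"
      using s s_eq by (simp add: systems_def families_def)
    moreover have "column_strict F"
      using column_strict_if_no_crossings[OF \<open>F \<in> families\<close>] s s_eq \<open>\<sigma> = id\<close> by simp
    ultimately show "s \<in> Pair id ` {F \<in> families. column_strict F}"
      using s_eq \<open>\<sigma> = id\<close> by simp
  qed
  moreover have "Pair id ` {F \<in> families. column_strict F} \<subseteq> {s \<in> systems. crossings s = {}}"
    using families_systems no_crossings_if_column_strict by auto
  ultimately have good: "{s \<in> systems. crossings s = {}} = Pair id ` {F \<in> families. column_strict F}"
    by (rule antisym)
  have "(\<Sum>s\<in>systems. signed_weight y z c s) =
      (\<Sum>s\<in>{s \<in> systems. crossings s \<noteq> {}}. signed_weight y z c s) + (\<Sum>s\<in>{s \<in> systems. crossings s = {}}. signed_weight y z c s)"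
    using finite_systems by (subst sum.union_disjoint[symmetric]) (auto intro: sum.cong)
  also have "\<dots> = (\<Sum>F\<in>{F \<in> families. column_strict F}. signed_weight y z c (id, F))"
    unfolding sum_crossing_systems_eq_0 good by (simp add: sum.reindex inj_on_def)
  finally show ?thesis
    by (simp add: signed_weight_def)
qed

lemma column_strict_distance:
  assumes F: "F \<in> families" and cs: "column_strict F" and kk: "Suc k \<le> k'" "k' < n"
    and x: "P k \<le> x" "x \<le> Q k" "P k' \<le> x - int (k' - k)" "x - int (k' - k) \<le> Q k'"
  shows "fst (F k x) < fst (F k' (x - int (k' - k)))"
  using kk x
proof (induction k' rule: dec_induct)
  case base
  then show ?case
    using cs[unfolded column_strict_def, rule_format, of k x] by simp
next
  case (step m)
  have shift: "x - int (Suc m - k) = x - int (m - k) - 1"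
    using step by simp
  have "P m + int (m - k) \<le> P k" "Q (Suc m) \<le> Q m - 1"
    using P_diff_le[of k m] Q_step[of m] step by auto
  then have x': "P m \<le> x - int (m - k)" "x - int (m - k) \<le> Q m"
    using step shift by auto
  have "fst (F m (x - int (m - k))) < fst (F (Suc m) (x - int (m - k) - 1))"
    using cs[unfolded column_strict_def, rule_format, of m "x - int (m - k)"] x' step shift by simp
  moreover have "fst (F k x) < fst (F m (x - int (m - k)))"
    using step x' by simp
  ultimately show ?case
    unfolding shift by simp
qed

section \<open>Expanding the determinant\<close>

lemma hsup_eq_sum_paths:
  "hsup y z (\<alpha> j) (\<beta> i) (\<alpha> j + P j + c) (\<beta> i + Q i + c) (Q i - P j + 1) = (\<Sum>f\<in>paths j i. path_weight y z c j i f)"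
proof (cases "P j - 1 \<le> Q i")
  case True
  then show ?thesis
    by (simp add: paths_def path_weight_def sum_row_fillings)
qed (simp add: paths_def hsup_neg)

lemma sum_permutes_eq_sum_systems:
  "(\<Sum>\<sigma> | \<sigma> permutes {..<n}. of_int (sign \<sigma>) * (\<Prod>k<n. \<Sum>f\<in>paths (\<sigma> k) k. path_weight y z c (\<sigma> k) k f))
   = (\<Sum>s\<in>systems. signed_weight y z c s)"
proof -
  have "(\<Sum>\<sigma> | \<sigma> permutes {..<n}. of_int (sign \<sigma>) * (\<Prod>k<n. \<Sum>f\<in>paths (\<sigma> k) k. path_weight y z c (\<sigma> k) k f))
     = (\<Sum>\<sigma> | \<sigma> permutes {..<n}. \<Sum>F\<in>PiE {..<n} (\<lambda>k. paths (\<sigma> k) k). of_int (sign \<sigma>) * (\<Prod>k<n. path_weight y z c (\<sigma> k) k (F k)))"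
    by (rule sum.cong[OF refl]) (simp add: prod_sum_PiE finite_paths sum_distrib_left)
  also have "\<dots> = (\<Sum>s\<in>systems. signed_weight y z c s)"
    unfolding systems_def signed_weight_def
    by (subst sum.Sigma) (auto simp: finite_permutations finite_PiE finite_paths split_def)
  finally show ?thesis .
qed

end

section \<open>Skew shapes as systems of row paths\<close>

lemma part_antimono:
  assumes p: "is_partition p" and i: "1 \<le> i" "i \<le> i'"
  shows "part p i' \<le> part p i"
proof (cases "i' \<le> length p")
  case True
  then have "p ! (i' - 1) \<le> p ! (i - 1)"
    using sorted_rev_nth_mono[of p "i - 1" "i' - 1"] p i by (auto simp: is_partition_def)
  then show ?thesis
    using True i by (auto simp: part_def)
qed (simp add: part_def)

text \<open>Cell \<open>(i, c)\<close> lies on the diagonal \<open>c - i\<close>; with 0-based row index \<open>k = i - 1\<close>, row \<open>k\<close>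
  of \<open>lam / mu\<close> occupies the diagonals \<open>row_start mu k..row_end lam k\<close>.\<close>

definition row_start :: "nat list \<Rightarrow> nat \<Rightarrow> int" where
  "row_start mu k = int (part mu (Suc k)) - int k"

definition row_end :: "nat list \<Rightarrow> nat \<Rightarrow> int" where
  "row_end lam k = int (part lam (Suc k)) - int (Suc k)"

lemma flagged_paths_skew_shape:
  assumes lam: "is_partition lam" and mu: "is_partition mu" and "contained mu lam"
    and "row_flags lam mu a' b'"
  shows "flagged_paths n (row_start mu) (row_end lam) (\<lambda>k. a' (Suc k)) (\<lambda>k. b' (Suc k))"
proof
  fix k
  show "row_start mu (Suc k) \<le> row_start mu k - 1"
    using part_antimono[OF mu, of "Suc k" "Suc (Suc k)"] by (simp add: row_start_def)
  show "row_end lam (Suc k) \<le> row_end lam k - 1"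
    using part_antimono[OF lam, of "Suc k" "Suc (Suc k)"] by (simp add: row_end_def)
  show "row_start mu k - 1 \<le> row_end lam k"
    using \<open>contained mu lam\<close>[unfolded contained_def, rule_format, of "Suc k"]
    by (simp add: row_start_def row_end_def)
  assume "row_start mu k - 1 \<le> row_end lam (Suc k)"
  then have "part mu (Suc k) < part lam (Suc (Suc k))"
    by (simp add: row_start_def row_end_def)
  then show "a' (Suc k) \<le> a' (Suc (Suc k)) \<and> b' (Suc k) \<le> b' (Suc (Suc k))"
    using \<open>row_flags lam mu a' b'\<close> by (simp add: row_flags_def)
qed

lemma cells_iff_diagonal:
  assumes "length lam \<le> n"
  shows "(i, c) \<in> cells lam mu \<longleftrightarrow>
    1 \<le> i \<and> i - 1 < n \<and> row_start mu (i - 1) \<le> int c - int i \<and> int c - int i \<le> row_end lam (i - 1)"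
proof -
  have "i \<le> length lam" if "1 \<le> i" "part mu i < c" "c \<le> part lam i"
    using that by (auto simp: part_def split: if_splits)
  then show ?thesis
    using assms by (auto simp: cells_def row_start_def row_end_def)
qed

lemma diagonal_cell:
  assumes "length lam \<le> n" "k < n" "row_start mu k \<le> x" "x \<le> row_end lam k"
  shows "(Suc k, nat (x + int k + 1)) \<in> cells lam mu" "int (nat (x + int k + 1)) - int (Suc k) = x"
proof -
  show eq: "int (nat (x + int k + 1)) - int (Suc k) = x"
    using assms(3) by (simp add: row_start_def)
  show "(Suc k, nat (x + int k + 1)) \<in> cells lam mu"
    unfolding cells_iff_diagonal[OF assms(1)] eq using assms by simp
qed

lemma bij_betw_cells_diagonals:
  assumes "length lam \<le> n"
  shows "bij_betw (\<lambda>(i, c). (i - 1, int c - int i)) (cells lam mu)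
           (SIGMA k:{..<n}. {row_start mu k..row_end lam k})"
proof (rule bij_betw_byWitness[where f' = "\<lambda>(k, x). (Suc k, nat (x + int k + 1))"])
  show "\<forall>a\<in>cells lam mu. (\<lambda>(k, x). (Suc k, nat (x + int k + 1))) ((\<lambda>(i, c). (i - 1, int c - int i)) a) = a"
    using cells_iff_diagonal[OF assms] by (auto simp: of_nat_diff)
  show "\<forall>a\<in>SIGMA k:{..<n}. {row_start mu k..row_end lam k}.
          (\<lambda>(i, c). (i - 1, int c - int i)) ((\<lambda>(k, x). (Suc k, nat (x + int k + 1))) a) = a"
    by (auto simp: row_start_def)
  show "(\<lambda>(i, c). (i - 1, int c - int i)) ` cells lam mu \<subseteq> (SIGMA k:{..<n}. {row_start mu k..row_end lam k})"
    using cells_iff_diagonal[OF assms] by auto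
  show "(\<lambda>(k, x). (Suc k, nat (x + int k + 1))) ` (SIGMA k:{..<n}. {row_start mu k..row_end lam k}) \<subseteq> cells lam mu"
    using diagonal_cell(1)[OF assms] by auto
qed

lemma flagged_ssytD:
  assumes "flagged_ssyt lam mu a' b' T"
  shows flagged_ssyt_bounds: "(i, c) \<in> cells lam mu \<Longrightarrow> a' i \<le> T i c \<and> T i c \<le> b' i"
    and flagged_ssyt_row: "(i, c) \<in> cells lam mu \<Longrightarrow> (i, c') \<in> cells lam mu \<Longrightarrow> c \<le> c' \<Longrightarrow> T i c \<le> T i c'"
    and flagged_ssyt_column: "(i, c) \<in> cells lam mu \<Longrightarrow> (i', c) \<in> cells lam mu \<Longrightarrow> i < i' \<Longrightarrow> T i c < T i' c"
  using assms unfolding flagged_ssyt_def by fast+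

lemma flagged_ssytI:
  assumes "\<And>i c. (i, c) \<in> cells lam mu \<Longrightarrow> a' i \<le> T i c \<and> T i c \<le> b' i"
    and "\<And>i c c'. (i, c) \<in> cells lam mu \<Longrightarrow> (i, c') \<in> cells lam mu \<Longrightarrow> c \<le> c' \<Longrightarrow> T i c \<le> T i c'"
    and "\<And>i i' c. (i, c) \<in> cells lam mu \<Longrightarrow> (i', c) \<in> cells lam mu \<Longrightarrow> i < i' \<Longrightarrow> T i c < T i' c"
    and "\<And>i c. (i, c) \<notin> cells lam mu \<Longrightarrow> T i c = 0"
  shows "flagged_ssyt lam mu a' b' T"
  using assms unfolding flagged_ssyt_def by blast

definition encode_entry :: "int \<Rightarrow> int \<times> bool \<Rightarrow> int + int" where
  "encode_entry c e = (if snd e then Inr (fst e + c) else Inl (fst e))"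

lemma inj_encode_entry: "inj (encode_entry c)"
  by (rule injI) (auto simp: encode_entry_def prod_eq_iff split: if_splits)

definition tableau_of :: "nat list \<Rightarrow> nat list \<Rightarrow> int \<Rightarrow> (nat \<Rightarrow> row_filling) \<Rightarrow> nat \<Rightarrow> nat \<Rightarrow> int + int" where
  "tableau_of lam mu r F i c =
     (if (i, c) \<in> cells lam mu then encode_entry (content lam r i c) (F (i - 1) (int c - int i)) else Inl 0)"

definition family_of :: "nat list \<Rightarrow> nat list \<Rightarrow> nat \<Rightarrow> (nat \<Rightarrow> nat \<Rightarrow> int) \<Rightarrow> (nat \<Rightarrow> nat \<Rightarrow> int + int) \<Rightarrow> nat \<Rightarrow> row_filling" where
  "family_of lam mu n U T k = (if k < n then (\<lambda>x. if row_start mu k \<le> x \<and> x \<le> row_end lam k then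
       (U (Suc k) (nat (x + int k + 1)), \<not> isl (T (Suc k) (nat (x + int k + 1)))) else undefined) else undefined)"

context
  fixes lam mu :: "nat list" and r :: int and a' b' :: "nat \<Rightarrow> int" and n :: nat
  assumes lam: "is_partition lam" and mu: "is_partition mu" and contained: "contained mu lam"
    and flags: "row_flags lam mu a' b'" and len: "length lam \<le> n"
begin

interpretation flagged_paths n "row_start mu" "row_end lam" "\<lambda>k. a' (Suc k)" "\<lambda>k. b' (Suc k)"
  by (rule flagged_paths_skew_shape[OF lam mu contained flags])

lemmas cells_iff = cells_iff_diagonal[OF len]

lemma wt_tableau_of:
  "wt lam mu y z (tableau_of lam mu r F) = (\<Prod>k<n. path_weight y z (r - 1 + int (length lam)) k k (F k))"
proof -
  define c where "c = r - 1 + int (length lam)"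
  define g where "g = (\<lambda>(k, x). entry_weight y z c x (F k x))"
  have "wt lam mu y z (tableau_of lam mu r F) = (\<Prod>ic\<in>cells lam mu. g ((\<lambda>(i, c). (i - 1, int c - int i)) ic))"
    unfolding wt_def
    by (rule prod.cong) (auto simp: tableau_of_def encode_entry_def entry_weight_def content_def c_def g_def algebra_simps)
  also have "\<dots> = (\<Prod>kx\<in>(SIGMA k:{..<n}. {row_start mu k..row_end lam k}). g kx)"
    by (rule prod.reindex_bij_betw[OF bij_betw_cells_diagonals[OF len]])
  also have "\<dots> = (\<Prod>k<n. \<Prod>x\<in>{row_start mu k..row_end lam k}. g (k, x))"
    by (subst prod.Sigma) (auto simp: split_def)
  also have "\<dots> = (\<Prod>k<n. path_weight y z c k k (F k))"
    by (simp add: path_weight_def g_def)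
  finally show ?thesis
    unfolding c_def .
qed

lemma inj_on_tableau_of: "inj_on (tableau_of lam mu r) families"
proof (rule inj_onI, rule ext, rule ext)
  fix F G k x assume F: "F \<in> families" and G: "G \<in> families" and eq: "tableau_of lam mu r F = tableau_of lam mu r G"
  show "F k x = G k x"
  proof (cases "k < n \<and> row_start mu k \<le> x \<and> x \<le> row_end lam k")
    case True
    note cell = diagonal_cell[OF len, of k mu x]
    have "tableau_of lam mu r F (Suc k) (nat (x + int k + 1)) = tableau_of lam mu r G (Suc k) (nat (x + int k + 1))"
      using eq by simp
    then show ?thesis
      using True cell inj_encode_entry by (simp add: tableau_of_def inj_eq)
  next
    case False
    then show ?thesis
      using F G paths_undefined[OF families_paths[OF F]] paths_undefined[OF families_paths[OF G]]
      by (cases "k < n") (auto simp: families_def PiE_def extensional_def)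
  qed
qed

lemma tableau_of_in_super_tableaux:
  assumes F: "F \<in> families" and cs: "column_strict F"
  shows "tableau_of lam mu r F \<in> super_tableaux lam mu r a' b'"
proof -
  define U where "U = (\<lambda>i c. if (i, c) \<in> cells lam mu then fst (F (i - 1) (int c - int i)) else 0)"
  have cellD: "i - 1 < n" "row_start mu (i - 1) \<le> int c - int i" "int c - int i \<le> row_end lam (i - 1)" "Suc (i - 1) = i"
    if "(i, c) \<in> cells lam mu" for i c
    using that by (auto simp: cells_iff)
  have "flagged_ssyt lam mu a' b' U"
  proof (rule flagged_ssytI)
    fix i c assume ic: "(i, c) \<in> cells lam mu"
    show "a' i \<le> U i c \<and> U i c \<le> b' i"
      using paths_bounds[OF families_paths[OF F cellD(1)[OF ic]] cellD(2,3)[OF ic]] ic cellD(4)[OF ic]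
      by (simp add: U_def)
  next
    fix i c c' assume ic: "(i, c) \<in> cells lam mu" and ic': "(i, c') \<in> cells lam mu" and "c \<le> c'"
    then show "U i c \<le> U i c'"
      using paths_mono[OF families_paths[OF F cellD(1)[OF ic]] cellD(2)[OF ic], of "int c' - int i"] cellD(3)[OF ic']
      by (simp add: U_def)
  next
    fix i i' c assume ic: "(i, c) \<in> cells lam mu" and ic': "(i', c) \<in> cells lam mu" and "i < i'"
    moreover have "int (i' - 1 - (i - 1)) = int i' - int i"
      using \<open>i < i'\<close> cellD(4)[OF ic] by simp
    ultimately show "U i c < U i' c"
      using column_strict_distance[OF F cs, of "i - 1" "i' - 1" "int c - int i"] cellD[OF ic] cellD[OF ic']
      by (simp add: U_def)
  qed (simp add: U_def)
  then show ?thesis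
    unfolding super_tableaux_def
    by (intro CollectI exI[of _ U]) (auto simp: tableau_of_def encode_entry_def U_def)
qed

lemma family_of_families:
  assumes U: "flagged_ssyt lam mu a' b' U"
  shows "family_of lam mu n U T \<in> families"
proof -
  have "family_of lam mu n U T k \<in> paths k k" if k: "k < n" for k
  proof -
    have "family_of lam mu n U T k \<in> row_fillings (a' (Suc k)) (b' (Suc k)) (row_start mu k) (row_end lam k)"
      unfolding row_fillings_iff
      using k diagonal_cell[OF len] flagged_ssyt_bounds[OF U] flagged_ssyt_row[OF U]
      by (auto simp: family_of_def)
    then show ?thesis
      using P_le_Q[of k] by (simp add: paths_def)
  qed
  then show ?thesis
    by (auto simp: families_def family_of_def)
qed

lemma column_strict_family_of:
  assumes U: "flagged_ssyt lam mu a' b' U"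
  shows "column_strict (family_of lam mu n U T)"
  unfolding column_strict_def
proof (intro allI impI)
  fix m x assume m: "Suc m < n"
    and x: "row_start mu m \<le> x" "x \<le> row_end lam m" "row_start mu (Suc m) \<le> x - 1" "x - 1 \<le> row_end lam (Suc m)"
  have "(Suc m, nat (x + int m + 1)) \<in> cells lam mu"
    using diagonal_cell(1)[OF len, of m mu x] m x by simp
  moreover have "(Suc (Suc m), nat (x + int m + 1)) \<in> cells lam mu"
    using diagonal_cell(1)[OF len, of "Suc m" mu "x - 1"] m x by simp
  ultimately show "fst (family_of lam mu n U T m x) < fst (family_of lam mu n U T (Suc m) (x - 1))"
    using flagged_ssyt_column[OF U] m x by (simp add: family_of_def)
qed

lemma tableau_of_family_of:
  assumes entries: "\<forall>(i, c)\<in>cells lam mu. T i c = Inl (U i c) \<or> T i c = Inr (U i c + content lam r i c)"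
    and outside: "\<forall>i c. (i, c) \<notin> cells lam mu \<longrightarrow> T i c = Inl 0"
  shows "tableau_of lam mu r (family_of lam mu n U T) = T"
proof (intro ext)
  fix i c
  show "tableau_of lam mu r (family_of lam mu n U T) i c = T i c"
  proof (cases "(i, c) \<in> cells lam mu")
    case True
    then have "i - 1 < n" "row_start mu (i - 1) \<le> int c - int i" "int c - int i \<le> row_end lam (i - 1)"
      and "nat (int c - int i + int (i - 1) + 1) = c" "Suc (i - 1) = i"
      by (auto simp: cells_iff)
    then show ?thesis
      using True entries by (auto simp: tableau_of_def encode_entry_def family_of_def)
  qed (use outside in \<open>simp add: tableau_of_def\<close>)
qed

lemma super_tableau_eq_tableau_of:
  assumes "T \<in> super_tableaux lam mu r a' b'"
  obtains F where "F \<in> families" "column_strict F" "tableau_of lam mu r F = T"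
proof -
  obtain U where U: "flagged_ssyt lam mu a' b' U"
    and entries: "\<forall>(i, c)\<in>cells lam mu. T i c = Inl (U i c) \<or> T i c = Inr (U i c + content lam r i c)"
    and outside: "\<forall>i c. (i, c) \<notin> cells lam mu \<longrightarrow> T i c = Inl 0"
    using assms by (auto simp: super_tableaux_def)
  then show thesis
    using that family_of_families column_strict_family_of tableau_of_family_of by blast
qed

lemma bij_betw_tableau_of:
  "bij_betw (tableau_of lam mu r) {F \<in> families. column_strict F} (super_tableaux lam mu r a' b')"
  unfolding bij_betw_def
proof
  show "inj_on (tableau_of lam mu r) {F \<in> families. column_strict F}"
    using inj_on_tableau_of by (rule inj_on_subset) auto
  show "tableau_of lam mu r ` {F \<in> families. column_strict F} = super_tableaux lam mu r a' b'"
    using tableau_of_in_super_tableaux super_tableau_eq_tableau_of by blast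
qed

lemma flagged_schur_eq_sum_paths:
  "flagged_schur lam mu r a' b' y z n =
     (\<Sum>\<sigma> | \<sigma> permutes {..<n}. of_int (sign \<sigma>) *
        (\<Prod>k<n. \<Sum>f\<in>paths (\<sigma> k) k. path_weight y z (r - 1 + int (length lam)) (\<sigma> k) k f))"
proof -
  define c where "c = r - 1 + int (length lam)"
  define g where "g = (\<lambda>(i0, j0). let i = Suc i0; j = Suc j0;
      a = a' j + content lam r j (Suc (part mu j)); b = b' i + content lam r i (part lam i)
    in hsup y z (a' j) (b' i) a b (int (part lam i) - int (part mu j) - int i + int j))"
  have entry: "g (i, j) = (\<Sum>f\<in>paths j i. path_weight y z c j i f)" for i j
  proof -
    have "g (i, j) = hsup y z (a' (Suc j)) (b' (Suc i)) (a' (Suc j) + row_start mu j + c)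
        (b' (Suc i) + row_end lam i + c) (row_end lam i - row_start mu j + 1)"
      by (simp add: g_def Let_def content_def row_start_def row_end_def c_def algebra_simps)
    then show ?thesis
      by (simp add: hsup_eq_sum_paths)
  qed
  have "flagged_schur lam mu r a' b' y z n = det (mat n n g)"
    by (simp add: flagged_schur_def g_def)
  also have "\<dots> = (\<Sum>\<sigma> | \<sigma> permutes {..<n}. of_int (sign \<sigma>) * (\<Prod>k<n. g (k, \<sigma> k)))"
    unfolding det_def
    by (auto simp: atLeast0LessThan permutes_in_image intro!: sum.cong prod.cong)
  finally show ?thesis
    by (simp add: entry c_def)
qed

end

theorem corollary4p9:
  fixes lam mu :: "nat list" and r :: int and a' b' :: "nat \<Rightarrow> int"
    and y z :: "int \<Rightarrow> 'a::comm_ring_1" and n :: nat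
  assumes "is_partition lam" and "is_partition mu" and "contained mu lam"
    and "row_flags lam mu a' b'"
    and "length lam \<le> n"
  shows "flagged_schur lam mu r a' b' y z n =
         (\<Sum>T\<in>super_tableaux lam mu r a' b'. wt lam mu y z T)"
proof -
  interpret flagged_paths n "row_start mu" "row_end lam" "\<lambda>k. a' (Suc k)" "\<lambda>k. b' (Suc k)"
    by (rule flagged_paths_skew_shape[OF assms(1-4)])
  let ?c = "r - 1 + int (length lam)"
  have "flagged_schur lam mu r a' b' y z n =
      (\<Sum>\<sigma> | \<sigma> permutes {..<n}. of_int (sign \<sigma>) * (\<Prod>k<n. \<Sum>f\<in>paths (\<sigma> k) k. path_weight y z ?c (\<sigma> k) k f))"
    by (rule flagged_schur_eq_sum_paths[OF assms])
  also have "\<dots> = (\<Sum>s\<in>systems. signed_weight y z ?c s)"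
    by (rule sum_permutes_eq_sum_systems)
  also have "\<dots> = (\<Sum>F\<in>{F \<in> families. column_strict F}. \<Prod>k<n. path_weight y z ?c k k (F k))"
    by (rule sum_systems_eq_sum_column_strict)
  also have "\<dots> = (\<Sum>F\<in>{F \<in> families. column_strict F}. wt lam mu y z (tableau_of lam mu r F))"
    by (simp add: wt_tableau_of[OF assms])
  also have "\<dots> = (\<Sum>T\<in>super_tableaux lam mu r a' b'. wt lam mu y z T)"
    using sum.reindex_bij_betw[OF bij_betw_tableau_of[OF assms]] .
  finally show ?thesis .
qed

end
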